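(* In the setting below, in $\gamma$-normal coordinates $x^i$ centered at $i$, the vector field $J^i=-4|\det\gamma|^{-1/2}\gamma^{ij}(J^1_j-J^3_j)$ has the form $$J^i=H_1^i+\frac{1}{r^3}\left(r^2H_2^i+x^iH\right),$$ where $H_1^i,H_2^i,H$ are real-analytic functions of $x$ near $i$.
   Context: Let $(\tilde M,\tilde g)$ be a stationary vacuum space-time with metric $\tilde g=\lambda(dt+\beta_i d\tilde x^i)^2-\lambda^{-1}\tilde\gamma_{ij}d\tilde x^i d\tilde x^j$, fields $\lambda>0,\beta_i,\tilde\gamma_{ij}$ living on the quotient manifold $\tilde X$ of trajectories of the Killing vector $\xi=\partial_t$, twist potential $\omega$ with $\tilde D_i\omega=-\lambda^2\tilde\epsilon_{ijk}\tilde D^j\beta^k$, and Hansen potentials $\tilde\phi_M=(\lambda^2+\omega^2-1)/(4\lambda)$, $\tilde\phi_S=\omega/(2\lambda)$, $\tilde\phi_K=(\lambda^2+\omega^2+1)/(4\lambda)$. Asymptotic flatness: there is $X=\tilde X\cup\{i\}$ such that with $\Omega=\tfrac12B^{-2}[(1+4(\tilde\phi_M^2+\tilde\phi_S^2))^{1/2}-1]$ ($B>0$ constant), $\Omega\in C^{2,\alpha}(X)$, $\Omega(i)=0$, $D\Omega(i)=0$, $\gamma_{ij}=\Omega^2\tilde\gamma_{ij}$ extends to a $C^{4,\alpha}$ metric on $X$, $D_jD_k\Omega(i)=2\gamma_{jk}(i)$ ($D$ the connection of $\gamma$). Rescaled potentials $\phi=\tilde\phi/\sqrt\Omega$. Known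 facts: in $\gamma$-normal coordinates $x^i$ centered at $i$, $\gamma_{ij},\phi_M,\phi_S,\Omega$ are real-analytic; $\phi_M=M+O(r)$, $\phi_S=S^ix_i+O(r^2)$ with $r=(\sum_j(x^j)^2)^{1/2}$; $\Omega=r^2f_\Omega$ with $f_\Omega$ analytic, positive, $f_\Omega(i)=1$; and $\phi_K=f_K/\sqrt\Omega$ with $f_K=\sqrt{\Omega(\phi_M^2+\phi_S^2)+1/4}$. Define $J^1_j=\phi_S D_j\phi_M-\phi_M D_j\phi_S$ and $J^3_j=\phi_S D_j\phi_K-\phi_K D_j\phi_S$. *)

theory Defs
  imports "HOL-Analysis.Analysis"
begin

text \<open>Points of the coordinate chart are vectors in R^3 (gamma-normal coordinates x^i,
  the point i at infinity being the origin).\<close>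

text \<open>Real-analyticity in several variables: near each point of U the function is the sum
  of an (unconditionally, i.e. absolutely) convergent power series in the multi-index variables.\<close>
definition real_analytic_on :: "(real^3 \<Rightarrow> real) \<Rightarrow> (real^3) set \<Rightarrow> bool" where
  "real_analytic_on f U \<longleftrightarrow>
     (\<forall>a\<in>U. \<exists>c :: (3 \<Rightarrow> nat) \<Rightarrow> real. \<exists>e>0. \<forall>x\<in>ball a e.
        ((\<lambda>\<alpha>. c \<alpha> * (\<Prod>k\<in>UNIV. (x$k - a$k) ^ (\<alpha> k))) has_sum f x) UNIV)"

definition pd :: "(real^3 \<Rightarrow> real) \<Rightarrow> 3 \<Rightarrow> real^3 \<Rightarrow> real" where
  "pd f j x = deriv (\<lambda>t. f (x + t *\<^sub>R axis j 1)) 0"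

definition phiK :: "(real^3 \<Rightarrow> real) \<Rightarrow> (real^3 \<Rightarrow> real) \<Rightarrow> (real^3 \<Rightarrow> real) \<Rightarrow> real^3 \<Rightarrow> real" where
  "phiK \<Omega> phiM phiS x =
     sqrt (\<Omega> x * ((phiM x)\<^sup>2 + (phiS x)\<^sup>2) + 1/4) / sqrt (\<Omega> x)"

definition J1 :: "(real^3 \<Rightarrow> real) \<Rightarrow> (real^3 \<Rightarrow> real) \<Rightarrow> real^3 \<Rightarrow> real^3" where
  "J1 phiM phiS x = (\<chi> j. phiS x * pd phiM j x - phiM x * pd phiS j x)"

definition J3 :: "(real^3 \<Rightarrow> real) \<Rightarrow> (real^3 \<Rightarrow> real) \<Rightarrow> (real^3 \<Rightarrow> real) \<Rightarrow> real^3 \<Rightarrow> real^3" where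
  "J3 \<Omega> phiM phiS x =
     (\<chi> j. phiS x * pd (phiK \<Omega> phiM phiS) j x - phiK \<Omega> phiM phiS x * pd phiS j x)"

definition Jvec :: "(real^3 \<Rightarrow> real^3^3) \<Rightarrow> (real^3 \<Rightarrow> real) \<Rightarrow> (real^3 \<Rightarrow> real) \<Rightarrow> (real^3 \<Rightarrow> real)
                    \<Rightarrow> real^3 \<Rightarrow> real^3" where
  "Jvec \<gamma> \<Omega> phiM phiS x =
     (-4 / sqrt \<bar>det (\<gamma> x)\<bar>) *\<^sub>R
       (matrix_inv (\<gamma> x) *v (J1 phiM phiS x - J3 \<Omega> phiM phiS x))"

end

(*
  Since Omega = r^2 f_Omega with f_Omega > 0 analytic, the rescaled Kerr potential is
  phi_K = F / r with F = sqrt (r^2 f_Omega (phi_M^2 + phi_S^2) + 1/4) / sqrt f_Omega analytic.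
  Hence D_j phi_K = D_j F / r - F x_j / r^3, so J^3 = V / r - (phi_S F / r^3) x with V analytic,
  while J^1 is analytic.  The matrix -4 |det gamma|^(-1/2) gamma^-1 is analytic and fixes x,
  because gamma x = x in normal coordinates; applying it gives H_1 from J^1, H_2 from -V and
  H = -4 |det gamma|^(-1/2) phi_S F.

  Analyticity is handled through multi-index power series with a geometric majorant.  This class
  is closed under sums and products, under composition with convergent one-variable power series
  (which gives square roots and inverses of non-vanishing functions) and under partial
  differentiation; with determinants and Cramer's rule it contains the entries of gamma^-1.
*)
theory Submission
  imports Defs
begin

section \<open>Multi-index power series\<close>

definition multi_pow :: "real^'n \<Rightarrow> ('n \<Rightarrow> nat) \<Rightarrow> real" where
  "multi_pow v \<alpha> = (\<Prod>k\<in>UNIV. v$k ^ \<alpha> k)"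

definition multi_deg :: "('n::finite \<Rightarrow> nat) \<Rightarrow> nat" where
  "multi_deg \<alpha> = (\<Sum>k\<in>UNIV. \<alpha> k)"

text \<open>The geometric majorant at some radius \<open>t > 0\<close> makes the class closed under products,
  composition and differentiation; by \<open>real_analytic_on_iff_power_series_at\<close> it is no restriction.\<close>
definition power_series_at :: "(real^'n \<Rightarrow> real) \<Rightarrow> real^'n \<Rightarrow> bool" where
  "power_series_at f a \<longleftrightarrow>
     (\<exists>c t e. 0 < t \<and> 0 < e \<and> (\<lambda>\<alpha>. \<bar>c \<alpha>\<bar> * t ^ multi_deg \<alpha>) summable_on UNIV \<and>
        (\<forall>x\<in>ball a e. ((\<lambda>\<alpha>. c \<alpha> * multi_pow (x - a) \<alpha>) has_sum f x) UNIV))"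

lemma power_series_atI:
  assumes "0 < t" "0 < e" "(\<lambda>\<alpha>. \<bar>c \<alpha>\<bar> * t ^ multi_deg \<alpha>) summable_on UNIV"
    and "\<And>x. x \<in> ball a e \<Longrightarrow> ((\<lambda>\<alpha>. c \<alpha> * multi_pow (x - a) \<alpha>) has_sum f x) UNIV"
  shows "power_series_at f a"
  using assms unfolding power_series_at_def by blast

lemma power_series_atE:
  assumes "power_series_at f a"
  obtains c t e where "0 < t" "0 < e" "(\<lambda>\<alpha>. \<bar>c \<alpha>\<bar> * t ^ multi_deg \<alpha>) summable_on UNIV"
    and "\<And>x. x \<in> ball a e \<Longrightarrow> ((\<lambda>\<alpha>. c \<alpha> * multi_pow (x - a) \<alpha>) has_sum f x) UNIV"
  using assms unfolding power_series_at_def by blast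

lemma multi_pow_add: "multi_pow v (\<lambda>k. \<alpha> k + \<beta> k) = multi_pow v \<alpha> * multi_pow v \<beta>"
  by (simp add: multi_pow_def power_add prod.distrib)

lemma multi_deg_add: "multi_deg (\<lambda>k. \<alpha> k + \<beta> k) = multi_deg \<alpha> + multi_deg \<beta>"
  by (simp add: multi_deg_def sum.distrib)

lemma multi_pow_0 [simp]: "multi_pow v (\<lambda>k. 0) = 1"
  by (simp add: multi_pow_def)

lemma multi_deg_eq_0_iff: "multi_deg \<alpha> = 0 \<longleftrightarrow> \<alpha> = (\<lambda>k. 0)"
  by (auto simp: multi_deg_def)

lemma multi_deg_0 [simp]: "multi_deg (\<lambda>k. 0) = 0"
  by (simp add: multi_deg_eq_0_iff)

lemma multi_pow_zero_vec: "multi_pow 0 \<alpha> = (if \<alpha> = (\<lambda>k. 0) then 1 else 0)"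
proof (cases "\<alpha> = (\<lambda>k. 0)")
  case False
  then obtain k where "\<alpha> k \<noteq> 0" by auto
  then show ?thesis using False by (auto simp: multi_pow_def prod_zero_iff)
qed simp

lemma multi_pow_unit: "multi_pow v (\<lambda>k. if k = j then 1 else 0) = v$j"
proof -
  have "(\<Prod>k\<in>UNIV. v$k ^ (if k = j then 1 else 0)) = (\<Prod>k\<in>UNIV. if k = j then v$k else 1)"
    by (rule prod.cong) auto
  then show ?thesis unfolding multi_pow_def by simp
qed

lemma multi_pow_split: "multi_pow v \<alpha> = v$j ^ \<alpha> j * multi_pow v (\<alpha>(j := 0))"
proof -
  have "multi_pow v \<alpha> = v$j ^ \<alpha> j * (\<Prod>k\<in>UNIV - {j}. v$k ^ \<alpha> k)"
    unfolding multi_pow_def by (rule prod.remove) auto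
  also have "(\<Prod>k\<in>UNIV - {j}. v$k ^ \<alpha> k) = multi_pow v (\<alpha>(j := 0))"
    unfolding multi_pow_def by (subst prod.remove[of _ j]) (auto intro!: prod.cong)
  finally show ?thesis .
qed

lemma multi_deg_split: "multi_deg \<alpha> = \<alpha> j + multi_deg (\<alpha>(j := 0))"
proof -
  have "multi_deg \<alpha> = \<alpha> j + (\<Sum>k\<in>UNIV - {j}. \<alpha> k)"
    unfolding multi_deg_def by (rule sum.remove) auto
  also have "(\<Sum>k\<in>UNIV - {j}. \<alpha> k) = multi_deg (\<alpha>(j := 0))"
    unfolding multi_deg_def by (subst sum.remove[of _ j]) (auto intro!: sum.cong)
  finally show ?thesis .
qed

lemma multi_pow_translate_axis:
  "multi_pow (v + s *\<^sub>R axis j 1) (\<alpha>(j := 0)) = multi_pow v (\<alpha>(j := 0))"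
  unfolding multi_pow_def by (rule prod.cong) (auto simp: axis_def)

lemma abs_multi_pow_le:
  assumes "\<And>k. \<bar>v$k\<bar> \<le> t"
  shows "\<bar>multi_pow v \<alpha>\<bar> \<le> t ^ multi_deg \<alpha>"
proof -
  have "\<bar>multi_pow v \<alpha>\<bar> = (\<Prod>k\<in>UNIV. \<bar>v$k\<bar> ^ \<alpha> k)"
    by (simp add: multi_pow_def abs_prod power_abs)
  also have "\<dots> \<le> (\<Prod>k\<in>UNIV. t ^ \<alpha> k)"
    by (intro prod_mono conjI power_mono assms) auto
  also have "\<dots> = t ^ multi_deg \<alpha>"
    by (simp add: multi_deg_def power_sum)
  finally show ?thesis .
qed

lemma abs_multi_pow_le_norm:
  assumes "norm v \<le> t"
  shows "\<bar>multi_pow v \<alpha>\<bar> \<le> t ^ multi_deg \<alpha>"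
  using assms by (intro abs_multi_pow_le) (rule order_trans[OF component_le_norm_cart])

lemma majorant_summable_mono:
  fixes c :: "'i \<Rightarrow> real"
  assumes "(\<lambda>i. \<bar>c i\<bar> * t ^ d i) summable_on I" "0 \<le> s" "s \<le> t"
  shows "(\<lambda>i. \<bar>c i\<bar> * s ^ d i) summable_on I"
  by (rule summable_on_comparison_test[OF assms(1)])
     (use assms in \<open>auto intro!: mult_left_mono power_mono\<close>)

lemma summable_on_abs_real:
  fixes f :: "'a \<Rightarrow> real"
  shows "f summable_on A \<Longrightarrow> (\<lambda>x. \<bar>f x\<bar>) summable_on A"
  using summable_on_iff_abs_summable_on_real[THEN iffD1] by (simp only: real_norm_def)

lemma has_sum_mult_real:
  fixes f :: "'a \<Rightarrow> real" and g :: "'b \<Rightarrow> real"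
  assumes f: "(f has_sum F) A" and g: "(g has_sum G) B"
  shows "((\<lambda>(a, b). f a * g b) has_sum F * G) (A \<times> B)"
proof -
  have f_abs: "(\<lambda>x. \<bar>f x\<bar>) summable_on A"
    using f summable_on_abs_real has_sum_imp_summable by blast
  have g_abs: "(\<lambda>x. \<bar>g x\<bar>) summable_on B"
    using g summable_on_abs_real has_sum_imp_summable by blast
  have "(\<lambda>(a, b). \<bar>f a\<bar> * \<bar>g b\<bar>) summable_on Sigma A (\<lambda>_. B)"
  proof (rule summable_on_SigmaI[where g = "\<lambda>a. \<bar>f a\<bar> * infsum (\<lambda>x. \<bar>g x\<bar>) B"])
    show "((\<lambda>y. case (x, y) of (a, b) \<Rightarrow> \<bar>f a\<bar> * \<bar>g b\<bar>) has_sum \<bar>f x\<bar> * infsum (\<lambda>x. \<bar>g x\<bar>) B) B"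
      for x
      using has_sum_cmult_right[OF g_abs[unfolded summable_iff_has_sum_infsum], of "\<bar>f x\<bar>"] by simp
    show "(\<lambda>a. \<bar>f a\<bar> * infsum (\<lambda>x. \<bar>g x\<bar>) B) summable_on A"
      using f_abs by (rule summable_on_cmult_left)
  qed auto
  then have "(\<lambda>p. norm ((\<lambda>(a, b). f a * g b) p)) summable_on A \<times> B"
    by (simp add: case_prod_unfold abs_mult)
  then have summable: "(\<lambda>(a, b). f a * g b) summable_on A \<times> B"
    by (rule abs_summable_summable)
  show ?thesis
  proof (rule has_sum_SigmaI[where g = "\<lambda>a. f a * G"])
    show "((\<lambda>y. case (x, y) of (a, b) \<Rightarrow> f a * g b) has_sum f x * G) B" for x
      using has_sum_cmult_right[OF g, of "f x"] by simp
    show "((\<lambda>a. f a * G) has_sum F * G) A"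
      using has_sum_cmult_left[OF f] by simp
  qed (use summable in auto)
qed

lemma has_sum_group_by:
  fixes c w :: "_ \<Rightarrow> real"
  assumes sum: "((\<lambda>i. c i * w (p i)) has_sum S) I"
    and fibres: "\<And>y. c summable_on {i\<in>I. p i = y}"
  shows "((\<lambda>y. infsum c {i\<in>I. p i = y} * w y) has_sum S) UNIV"
proof -
  have "((\<lambda>(y, i). c i * w y) has_sum S) (Sigma UNIV (\<lambda>y. {i\<in>I. p i = y}))"
    using sum by (subst has_sum_reindex_bij_witness[where j = snd and i = "\<lambda>i. (p i, i)"]) auto
  then show ?thesis
  proof (rule has_sum_SigmaD)
    show "((\<lambda>i. (\<lambda>(y, i). c i * w y) (y, i)) has_sum infsum c {i\<in>I. p i = y} * w y) {i\<in>I. p i = y}"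
      for y
      using fibres by (simp add: has_sum_cmult_left)
  qed
qed

lemma power_series_at_regroup:
  fixes c :: "'i \<Rightarrow> real" and p :: "'i \<Rightarrow> ('n::finite \<Rightarrow> nat)"
  assumes t: "0 < t" and e: "0 < e"
    and majorant: "(\<lambda>i. \<bar>c i\<bar> * t ^ multi_deg (p i)) summable_on I"
    and expansion: "\<And>x. x \<in> ball a e \<Longrightarrow> ((\<lambda>i. c i * multi_pow (x - a) (p i)) has_sum f x) I"
  shows "power_series_at f a"
proof -
  define B where "B \<alpha> = {i\<in>I. p i = \<alpha>}" for \<alpha>
  have abs_B: "(\<lambda>i. \<bar>c i\<bar>) summable_on B \<alpha>" for \<alpha>
  proof -
    have "(\<lambda>i. \<bar>c i\<bar> * t ^ multi_deg \<alpha>) summable_on B \<alpha>"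
      using summable_on_subset_banach[OF majorant, of "B \<alpha>"]
      by (rule summable_on_cong[THEN iffD1, rotated]) (auto simp: B_def)
    then have "(\<lambda>i. (\<bar>c i\<bar> * t ^ multi_deg \<alpha>) * (1 / t ^ multi_deg \<alpha>)) summable_on B \<alpha>"
      by (rule summable_on_cmult_left)
    then show ?thesis
      using t by simp
  qed
  then have c_B: "c summable_on B \<alpha>" for \<alpha>
    using summable_on_iff_abs_summable_on_real by auto
  have "((\<lambda>\<alpha>. infsum (\<lambda>i. \<bar>c i\<bar>) (B \<alpha>) * t ^ multi_deg \<alpha>) has_sum
      infsum (\<lambda>i. \<bar>c i\<bar> * t ^ multi_deg (p i)) I) UNIV"
    unfolding B_def using majorant abs_B[unfolded B_def] by (intro has_sum_group_by) auto
  then have "(\<lambda>\<alpha>. \<bar>infsum c (B \<alpha>)\<bar> * t ^ multi_deg \<alpha>) summable_on UNIV"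
  proof (rule summable_on_comparison_test[OF has_sum_imp_summable])
    show "\<bar>infsum c (B \<alpha>)\<bar> * t ^ multi_deg \<alpha> \<le> infsum (\<lambda>i. \<bar>c i\<bar>) (B \<alpha>) * t ^ multi_deg \<alpha>" for \<alpha>
      using norm_infsum_bound[of c "B \<alpha>"] abs_B t by (intro mult_right_mono) auto
  qed (use t in auto)
  moreover have "((\<lambda>\<alpha>. infsum c (B \<alpha>) * multi_pow (x - a) \<alpha>) has_sum f x) UNIV" if "x \<in> ball a e" for x
    unfolding B_def using expansion[OF that] c_B[unfolded B_def] by (rule has_sum_group_by)
  ultimately show ?thesis
    using t e by (intro power_series_atI[of t e]) auto
qed

lemma power_series_at_cong:
  assumes "power_series_at f a" "0 < d" "\<And>x. x \<in> ball a d \<Longrightarrow> f x = g x"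
  shows "power_series_at g a"
proof -
  obtain c t e where "0 < t" "0 < e" "(\<lambda>\<alpha>. \<bar>c \<alpha>\<bar> * t ^ multi_deg \<alpha>) summable_on UNIV"
    and "\<And>x. x \<in> ball a e \<Longrightarrow> ((\<lambda>\<alpha>. c \<alpha> * multi_pow (x - a) \<alpha>) has_sum f x) UNIV"
    using assms(1) by (elim power_series_atE) blast
  then show ?thesis
    using assms(2,3) by (intro power_series_atI[of t "min e d"]) (auto simp flip: assms(3))
qed

lemma power_series_at_same_radius:
  assumes "power_series_at f a"
  shows "\<exists>c t. 0 < t \<and> (\<lambda>\<alpha>. \<bar>c \<alpha>\<bar> * t ^ multi_deg \<alpha>) summable_on UNIV \<and>
    (\<forall>x\<in>ball a t. ((\<lambda>\<alpha>. c \<alpha> * multi_pow (x - a) \<alpha>) has_sum f x) UNIV)"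
proof -
  obtain c t e where "0 < t" "0 < e" and majorant: "(\<lambda>\<alpha>. \<bar>c \<alpha>\<bar> * t ^ multi_deg \<alpha>) summable_on UNIV"
    and expansion: "\<And>x. x \<in> ball a e \<Longrightarrow> ((\<lambda>\<alpha>. c \<alpha> * multi_pow (x - a) \<alpha>) has_sum f x) UNIV"
    using assms by (elim power_series_atE) blast
  have "(\<lambda>\<alpha>. \<bar>c \<alpha>\<bar> * min t e ^ multi_deg \<alpha>) summable_on UNIV"
    using majorant by (rule majorant_summable_mono) (use \<open>0 < e\<close> \<open>0 < t\<close> in auto)
  then show ?thesis
    using \<open>0 < t\<close> \<open>0 < e\<close> expansion by (intro exI[of _ c] exI[of _ "min t e"]) auto
qed

lemma power_series_at_common_radius:
  assumes "power_series_at f a" "power_series_at g a"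
  shows "\<exists>c1 c2 t. 0 < t \<and>
    (\<lambda>\<alpha>. \<bar>c1 \<alpha>\<bar> * t ^ multi_deg \<alpha>) summable_on UNIV \<and> (\<lambda>\<alpha>. \<bar>c2 \<alpha>\<bar> * t ^ multi_deg \<alpha>) summable_on UNIV \<and>
    (\<forall>x\<in>ball a t. ((\<lambda>\<alpha>. c1 \<alpha> * multi_pow (x - a) \<alpha>) has_sum f x) UNIV \<and>
      ((\<lambda>\<alpha>. c2 \<alpha> * multi_pow (x - a) \<alpha>) has_sum g x) UNIV)"
proof -
  obtain c1 t1 where "0 < t1" and majorant1: "(\<lambda>\<alpha>. \<bar>c1 \<alpha>\<bar> * t1 ^ multi_deg \<alpha>) summable_on UNIV"
    and "\<forall>x\<in>ball a t1. ((\<lambda>\<alpha>. c1 \<alpha> * multi_pow (x - a) \<alpha>) has_sum f x) UNIV"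
    using power_series_at_same_radius[OF assms(1)] by blast
  moreover obtain c2 t2 where "0 < t2" and majorant2: "(\<lambda>\<alpha>. \<bar>c2 \<alpha>\<bar> * t2 ^ multi_deg \<alpha>) summable_on UNIV"
    and "\<forall>x\<in>ball a t2. ((\<lambda>\<alpha>. c2 \<alpha> * multi_pow (x - a) \<alpha>) has_sum g x) UNIV"
    using power_series_at_same_radius[OF assms(2)] by blast
  moreover have "(\<lambda>\<alpha>. \<bar>c1 \<alpha>\<bar> * min t1 t2 ^ multi_deg \<alpha>) summable_on UNIV"
    using majorant1 by (rule majorant_summable_mono) (use \<open>0 < t1\<close> \<open>0 < t2\<close> in auto)
  moreover have "(\<lambda>\<alpha>. \<bar>c2 \<alpha>\<bar> * min t1 t2 ^ multi_deg \<alpha>) summable_on UNIV"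
    using majorant2 by (rule majorant_summable_mono) (use \<open>0 < t1\<close> \<open>0 < t2\<close> in auto)
  ultimately show ?thesis
    by (intro exI[of _ c1] exI[of _ c2] exI[of _ "min t1 t2"]) auto
qed

lemma power_series_at_const: "power_series_at (\<lambda>x. k) a"
  by (rule power_series_at_regroup[where I = "{()}" and c = "\<lambda>_. k" and p = "\<lambda>_ _. 0"
        and t = 1 and e = 1]) (auto intro: has_sum_finiteI)

lemma power_series_at_coord: "power_series_at (\<lambda>x. x$j) a"
proof (rule power_series_at_regroup[where I = UNIV and c = "\<lambda>b. if b then a$j else 1"
      and p = "\<lambda>b. if b then (\<lambda>k. 0) else (\<lambda>k. if k = j then 1 else 0)" and t = 1 and e = 1])
  fix x
  show "((\<lambda>b. (if b then a$j else 1) *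
      multi_pow (x - a) (if b then (\<lambda>k. 0) else (\<lambda>k. if k = j then 1 else 0))) has_sum x$j) UNIV"
    by (rule has_sum_finiteI) (auto simp: UNIV_bool multi_pow_unit)
qed auto

lemma power_series_at_add:
  assumes "power_series_at f a" "power_series_at g a"
  shows "power_series_at (\<lambda>x. f x + g x) a"
proof -
  obtain c1 c2 t where "0 < t"
    and majorant: "(\<lambda>\<alpha>. \<bar>c1 \<alpha>\<bar> * t ^ multi_deg \<alpha>) summable_on UNIV" "(\<lambda>\<alpha>. \<bar>c2 \<alpha>\<bar> * t ^ multi_deg \<alpha>) summable_on UNIV"
    and expansion: "\<forall>x\<in>ball a t. ((\<lambda>\<alpha>. c1 \<alpha> * multi_pow (x - a) \<alpha>) has_sum f x) UNIV \<and>
      ((\<lambda>\<alpha>. c2 \<alpha> * multi_pow (x - a) \<alpha>) has_sum g x) UNIV"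
    using power_series_at_common_radius[OF assms] by blast
  have "(\<lambda>\<alpha>. \<bar>c1 \<alpha> + c2 \<alpha>\<bar> * t ^ multi_deg \<alpha>) summable_on UNIV"
  proof (rule summable_on_comparison_test[OF summable_on_add[OF majorant]])
    show "\<bar>c1 \<alpha> + c2 \<alpha>\<bar> * t ^ multi_deg \<alpha> \<le> \<bar>c1 \<alpha>\<bar> * t ^ multi_deg \<alpha> + \<bar>c2 \<alpha>\<bar> * t ^ multi_deg \<alpha>" for \<alpha>
      using mult_right_mono[OF abs_triangle_ineq, of "t ^ multi_deg \<alpha>" "c1 \<alpha>" "c2 \<alpha>"] \<open>0 < t\<close>
      by (simp add: distrib_right)
  qed (use \<open>0 < t\<close> in auto)
  moreover have "((\<lambda>\<alpha>. (c1 \<alpha> + c2 \<alpha>) * multi_pow (x - a) \<alpha>) has_sum f x + g x) UNIV"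
    if "x \<in> ball a t" for x
  proof -
    have "((\<lambda>\<alpha>. c1 \<alpha> * multi_pow (x - a) \<alpha>) has_sum f x) UNIV"
      "((\<lambda>\<alpha>. c2 \<alpha> * multi_pow (x - a) \<alpha>) has_sum g x) UNIV"
      using expansion that by auto
    from has_sum_add[OF this] show ?thesis
      by (simp add: distrib_right)
  qed
  ultimately show ?thesis
    using \<open>0 < t\<close> by (intro power_series_atI[of t t]) auto
qed

lemma power_series_at_mult:
  assumes "power_series_at f a" "power_series_at g a"
  shows "power_series_at (\<lambda>x. f x * g x) a"
proof -
  obtain c1 c2 t where "0 < t"
    and majorant: "(\<lambda>\<alpha>. \<bar>c1 \<alpha>\<bar> * t ^ multi_deg \<alpha>) summable_on UNIV" "(\<lambda>\<alpha>. \<bar>c2 \<alpha>\<bar> * t ^ multi_deg \<alpha>) summable_on UNIV"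
    and expansion: "\<forall>x\<in>ball a t. ((\<lambda>\<alpha>. c1 \<alpha> * multi_pow (x - a) \<alpha>) has_sum f x) UNIV \<and>
      ((\<lambda>\<alpha>. c2 \<alpha> * multi_pow (x - a) \<alpha>) has_sum g x) UNIV"
    using power_series_at_common_radius[OF assms] by blast
  have "(\<lambda>(\<alpha>, \<beta>). \<bar>c1 \<alpha> * c2 \<beta>\<bar> * t ^ multi_deg (\<lambda>k. \<alpha> k + \<beta> k)) summable_on UNIV \<times> UNIV"
    using has_sum_mult_real[OF majorant[unfolded summable_iff_has_sum_infsum]]
    by (auto simp: summable_on_def case_prod_unfold multi_deg_add power_add abs_mult mult_ac)
  moreover have "((\<lambda>(\<alpha>, \<beta>). c1 \<alpha> * c2 \<beta> * multi_pow (x - a) (\<lambda>k. \<alpha> k + \<beta> k)) has_sum f x * g x)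
      (UNIV \<times> UNIV)" if "x \<in> ball a t" for x
  proof -
    have "((\<lambda>\<alpha>. c1 \<alpha> * multi_pow (x - a) \<alpha>) has_sum f x) UNIV"
      "((\<lambda>\<alpha>. c2 \<alpha> * multi_pow (x - a) \<alpha>) has_sum g x) UNIV"
      using expansion that by auto
    from has_sum_mult_real[OF this] show ?thesis
      by (simp add: case_prod_unfold multi_pow_add mult_ac)
  qed
  ultimately show ?thesis
    using \<open>0 < t\<close> by (intro power_series_at_regroup[where p = "\<lambda>(\<alpha>, \<beta>) k. \<alpha> k + \<beta> k" and t = t and e = t])
      (auto simp: case_prod_unfold)
qed

lemma power_series_at_minus: "power_series_at f a \<Longrightarrow> power_series_at (\<lambda>x. - f x) a"
  using power_series_at_mult[OF power_series_at_const[of "-1"]] by simp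

lemma power_series_at_diff:
  "power_series_at f a \<Longrightarrow> power_series_at g a \<Longrightarrow> power_series_at (\<lambda>x. f x - g x) a"
  using power_series_at_add[OF _ power_series_at_minus] by simp

lemma power_series_at_sum:
  "finite S \<Longrightarrow> (\<And>i. i \<in> S \<Longrightarrow> power_series_at (f i) a) \<Longrightarrow> power_series_at (\<lambda>x. \<Sum>i\<in>S. f i x) a"
  by (induction S rule: finite_induct) (auto intro: power_series_at_add power_series_at_const)

lemma power_series_at_prod:
  "finite S \<Longrightarrow> (\<And>i. i \<in> S \<Longrightarrow> power_series_at (f i) a) \<Longrightarrow> power_series_at (\<lambda>x. \<Prod>i\<in>S. f i x) a"
  by (induction S rule: finite_induct) (auto intro: power_series_at_mult power_series_at_const)

lemma power_series_value_at_center: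
  assumes "((\<lambda>\<alpha>. c \<alpha> * multi_pow (a - a) \<alpha>) has_sum y) UNIV"
  shows "y = c (\<lambda>k. 0)"
proof -
  have "((\<lambda>\<alpha>. c \<alpha> * multi_pow (a - a) \<alpha>) has_sum c (\<lambda>k. 0)) UNIV"
    by (rule has_sum_finite_neutralI[where B = "{\<lambda>k. 0}"]) (auto simp: multi_pow_zero_vec)
  with assms show ?thesis
    using has_sum_unique by blast
qed

lemma power_series_at_remove_constant:
  assumes "power_series_at h a"
  shows "\<exists>d t. 0 < t \<and> d (\<lambda>k. 0) = 0 \<and> (\<lambda>\<alpha>. \<bar>d \<alpha>\<bar> * t ^ multi_deg \<alpha>) summable_on UNIV \<and>
    (\<forall>x\<in>ball a t. ((\<lambda>\<alpha>. d \<alpha> * multi_pow (x - a) \<alpha>) has_sum h x - h a) UNIV)"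
proof -
  obtain c t where "0 < t" and majorant: "(\<lambda>\<alpha>. \<bar>c \<alpha>\<bar> * t ^ multi_deg \<alpha>) summable_on UNIV"
    and expansion: "\<forall>x\<in>ball a t. ((\<lambda>\<alpha>. c \<alpha> * multi_pow (x - a) \<alpha>) has_sum h x) UNIV"
    using power_series_at_same_radius[OF assms] by blast
  define d where "d \<alpha> = (if \<alpha> = (\<lambda>k. 0) then 0 else c \<alpha>)" for \<alpha>
  have "((\<lambda>\<alpha>. c \<alpha> * multi_pow (a - a) \<alpha>) has_sum h a) UNIV"
    using expansion[rule_format, of a] \<open>0 < t\<close> by simp
  then have "h a = c (\<lambda>k. 0)"
    by (rule power_series_value_at_center)
  then have constant_term: "((\<lambda>\<alpha>. if \<alpha> = (\<lambda>k. 0) then c (\<lambda>k. 0) else 0) has_sum h a) UNIV"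
    by (intro has_sum_finite_neutralI[where B = "{\<lambda>k. 0}"]) auto
  have "((\<lambda>\<alpha>. d \<alpha> * multi_pow (x - a) \<alpha>) has_sum h x + - h a) UNIV" if "x \<in> ball a t" for x
    using has_sum_add[OF expansion[rule_format, OF that] has_sum_uminusI[OF constant_term]]
    by (rule has_sum_cong[THEN iffD1, rotated]) (auto simp: d_def)
  moreover have "(\<lambda>\<alpha>. \<bar>d \<alpha>\<bar> * t ^ multi_deg \<alpha>) summable_on UNIV"
    by (rule summable_on_comparison_test[OF majorant]) (use \<open>0 < t\<close> in \<open>auto simp: d_def\<close>)
  ultimately show ?thesis
    using \<open>0 < t\<close> by (intro exI[of _ d] exI[of _ t]) (simp add: d_def)
qed

lemma majorant_without_constant_le:
  fixes d :: "('n::finite \<Rightarrow> nat) \<Rightarrow> real"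
  assumes "d (\<lambda>k. 0) = 0" and majorant: "(\<lambda>\<alpha>. \<bar>d \<alpha>\<bar> * t0 ^ multi_deg \<alpha>) summable_on UNIV"
    and "0 < t" "t \<le> t0"
  shows "infsum (\<lambda>\<alpha>. \<bar>d \<alpha>\<bar> * t ^ multi_deg \<alpha>) UNIV
    \<le> t / t0 * infsum (\<lambda>\<alpha>. \<bar>d \<alpha>\<bar> * t0 ^ multi_deg \<alpha>) UNIV"
proof -
  txt \<open>Without constant term every monomial has degree at least 1, so the majorant shrinks at
    least linearly with the radius.\<close>
  have shrink: "\<bar>d \<alpha>\<bar> * t ^ multi_deg \<alpha> \<le> t / t0 * (\<bar>d \<alpha>\<bar> * t0 ^ multi_deg \<alpha>)" for \<alpha>
  proof (cases "\<alpha> = (\<lambda>k. 0)")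
    case False
    then have "multi_deg \<alpha> \<ge> 1"
      using multi_deg_eq_0_iff[of \<alpha>] by linarith
    have "t0 \<noteq> 0"
      using assms(3,4) by simp
    then have "t ^ multi_deg \<alpha> = (t / t0) ^ multi_deg \<alpha> * t0 ^ multi_deg \<alpha>"
      by (simp add: power_divide)
    also have "\<dots> \<le> t / t0 * t0 ^ multi_deg \<alpha>"
      using power_decreasing[OF \<open>multi_deg \<alpha> \<ge> 1\<close>, of "t / t0"] assms(3,4)
      by (intro mult_right_mono) auto
    finally have "t ^ multi_deg \<alpha> \<le> t / t0 * t0 ^ multi_deg \<alpha>" .
    from mult_left_mono[OF this abs_ge_zero[of "d \<alpha>"]] show ?thesis
      by (simp add: mult_ac)
  qed (simp add: assms(1))
  have "(\<lambda>\<alpha>. \<bar>d \<alpha>\<bar> * t ^ multi_deg \<alpha>) summable_on UNIV"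
    using majorant by (rule majorant_summable_mono) (use assms(3,4) in auto)
  then have "infsum (\<lambda>\<alpha>. \<bar>d \<alpha>\<bar> * t ^ multi_deg \<alpha>) UNIV
      \<le> infsum (\<lambda>\<alpha>. t / t0 * (\<bar>d \<alpha>\<bar> * t0 ^ multi_deg \<alpha>)) UNIV"
    by (rule infsum_mono[OF _ summable_on_cmult_right[OF majorant] shrink])
  also have "\<dots> = t / t0 * infsum (\<lambda>\<alpha>. \<bar>d \<alpha>\<bar> * t0 ^ multi_deg \<alpha>) UNIV"
    by (rule infsum_cmult_right[OF majorant])
  finally show ?thesis .
qed

lemma power_series_at_small_majorant:
  assumes "power_series_at h a" "0 < s"
  obtains t e D d where "0 < t" "0 < e" "e \<le> t" "D \<le> s"
    "((\<lambda>\<alpha>. \<bar>d \<alpha>\<bar> * t ^ multi_deg \<alpha>) has_sum D) UNIV"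
    "\<forall>x\<in>ball a e. ((\<lambda>\<alpha>. d \<alpha> * multi_pow (x - a) \<alpha>) has_sum h x - h a) UNIV"
proof -
  obtain d t0 where "0 < t0" "d (\<lambda>k. 0) = 0"
    and majorant: "(\<lambda>\<alpha>. \<bar>d \<alpha>\<bar> * t0 ^ multi_deg \<alpha>) summable_on UNIV"
    and expansion: "\<forall>x\<in>ball a t0. ((\<lambda>\<alpha>. d \<alpha> * multi_pow (x - a) \<alpha>) has_sum h x - h a) UNIV"
    using power_series_at_remove_constant[OF assms(1)] by blast
  define D0 where "D0 = infsum (\<lambda>\<alpha>. \<bar>d \<alpha>\<bar> * t0 ^ multi_deg \<alpha>) UNIV"
  have "D0 \<ge> 0"
    unfolding D0_def by (rule infsum_nonneg) (use \<open>0 < t0\<close> in auto)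
  define t where "t = min t0 (t0 * s / (D0 + 1))"
  have t: "0 < t" "t \<le> t0"
    using \<open>0 < t0\<close> \<open>0 < s\<close> \<open>D0 \<ge> 0\<close> by (auto simp: t_def)
  define D where "D = infsum (\<lambda>\<alpha>. \<bar>d \<alpha>\<bar> * t ^ multi_deg \<alpha>) UNIV"
  have "D \<le> t / t0 * D0"
    unfolding D_def D0_def using \<open>d (\<lambda>k. 0) = 0\<close> majorant t by (rule majorant_without_constant_le)
  also have "\<dots> \<le> s / (D0 + 1) * D0"
    using \<open>0 < t0\<close> \<open>D0 \<ge> 0\<close>
    by (intro mult_right_mono) (simp_all add: t_def divide_le_eq min_le_iff_disj)
  also have "\<dots> \<le> s"
    using \<open>0 < s\<close> \<open>D0 \<ge> 0\<close> by (simp add: field_simps)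
  finally have "D \<le> s" .
  moreover have "((\<lambda>\<alpha>. \<bar>d \<alpha>\<bar> * t ^ multi_deg \<alpha>) has_sum D) UNIV"
    unfolding D_def using majorant t by (simp add: majorant_summable_mono)
  ultimately show thesis
    using t expansion by (intro that[of t t]) auto
qed

lemma has_sum_prod_list_length:
  fixes u :: "'a \<Rightarrow> real"
  assumes "(u has_sum U) UNIV"
  shows "((\<lambda>xs. prod_list (map u xs)) has_sum U ^ n) {xs. length xs = n}"
proof (induction n)
  case 0
  have "{xs::'a list. length xs = 0} = {[]}"
    by auto
  then show ?case
    by (simp add: has_sum_finiteI)
next
  case (Suc n)
  have "((\<lambda>xs. prod_list (map u xs)) has_sum U * U ^ n) {xs. length xs = Suc n} \<longleftrightarrow>
      ((\<lambda>(x, xs). u x * prod_list (map u xs)) has_sum U * U ^ n) (UNIV \<times> {xs. length xs = n})"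
    by (rule has_sum_reindex_bij_witness[where j = "\<lambda>xs. (hd xs, tl xs)" and i = "\<lambda>(x, xs). x # xs"])
      (auto simp: length_Suc_conv)
  then show ?case
    using has_sum_mult_real[OF assms Suc] by simp
qed

lemma has_sum_lists_by_length:
  "(F has_sum S) (UNIV :: 'a list set) \<longleftrightarrow>
     ((\<lambda>(n, xs). F xs) has_sum S) (Sigma UNIV (\<lambda>n. {xs. length xs = n}))"
  by (rule has_sum_reindex_bij_witness[where j = "\<lambda>xs. (length xs, xs)" and i = snd]) auto

lemma summable_on_lists_by_length:
  "F summable_on (UNIV :: 'a list set) \<longleftrightarrow>
     (\<lambda>(n, xs). F xs) summable_on (Sigma UNIV (\<lambda>n. {xs. length xs = n}))"
  by (rule summable_on_reindex_bij_witness[where j = "\<lambda>xs. (length xs, xs)" and i = snd]) auto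

lemma summable_on_lists_majorant:
  fixes m :: "'a \<Rightarrow> real"
  assumes m: "(m has_sum D) UNIV" "\<And>\<alpha>. 0 \<le> m \<alpha>" and b: "summable (\<lambda>n. \<bar>b n\<bar> * D ^ n)"
  shows "(\<lambda>xs. \<bar>b (length xs)\<bar> * prod_list (map m xs)) summable_on UNIV"
proof -
  have "D \<ge> 0"
    using m(1) by (rule has_sum_nonneg) (use m(2) in simp)
  then have "summable (\<lambda>n. norm (\<bar>b n\<bar> * D ^ n))"
    using b by (simp add: abs_mult)
  then have "(\<lambda>n. \<bar>b n\<bar> * D ^ n) summable_on UNIV"
    by (rule norm_summable_imp_summable_on)
  moreover have "((\<lambda>xs. \<bar>b (length xs)\<bar> * prod_list (map m xs)) has_sum \<bar>b n\<bar> * D ^ n) {xs. length xs = n}"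
    for n
    using has_sum_cmult_right[OF has_sum_prod_list_length[OF m(1)], of "\<bar>b n\<bar>"]
    by (rule has_sum_cong[THEN iffD1, rotated]) simp
  ultimately have "(\<lambda>(n, xs). \<bar>b (length xs)\<bar> * prod_list (map m xs)) summable_on
      Sigma UNIV (\<lambda>n. {xs. length xs = n})"
    using m(2) by (intro summable_on_SigmaI[where g = "\<lambda>n. \<bar>b n\<bar> * D ^ n"])
      (auto intro!: mult_nonneg_nonneg prod_list_nonneg)
  then show ?thesis
    by (simp add: summable_on_lists_by_length)
qed

lemma has_sum_lists_power_series:
  fixes u :: "'a \<Rightarrow> real"
  assumes u: "(u has_sum U) UNIV"
    and summable: "(\<lambda>xs. b (length xs) * prod_list (map u xs)) summable_on UNIV"
    and series: "((\<lambda>n. b n * U ^ n) has_sum y) UNIV"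
  shows "((\<lambda>xs. b (length xs) * prod_list (map u xs)) has_sum y) UNIV"
proof -
  have "((\<lambda>xs. b (length xs) * prod_list (map u xs)) has_sum b n * U ^ n) {xs. length xs = n}" for n
    using has_sum_cmult_right[OF has_sum_prod_list_length[OF u], of "b n"]
    by (rule has_sum_cong[THEN iffD1, rotated]) simp
  then have "((\<lambda>(n, xs). b (length xs) * prod_list (map u xs)) has_sum y)
      (Sigma UNIV (\<lambda>n. {xs. length xs = n}))"
    using summable by (intro has_sum_SigmaI[OF _ series]) (simp_all add: summable_on_lists_by_length[symmetric])
  then show ?thesis
    by (simp add: has_sum_lists_by_length)
qed

definition multi_index_sum :: "('n \<Rightarrow> nat) list \<Rightarrow> ('n \<Rightarrow> nat)" where
  "multi_index_sum xs = (\<lambda>k. sum_list (map (\<lambda>\<alpha>. \<alpha> k) xs))"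

lemma multi_pow_multi_index_sum:
  "multi_pow v (multi_index_sum xs) = prod_list (map (multi_pow v) xs)"
  by (induction xs) (simp_all add: multi_index_sum_def multi_pow_add)

lemma power_multi_deg_multi_index_sum:
  "(t::real) ^ multi_deg (multi_index_sum xs) = prod_list (map (\<lambda>\<alpha>. t ^ multi_deg \<alpha>) xs)"
  by (induction xs) (simp_all add: multi_index_sum_def multi_deg_add power_add)

lemma prod_list_map_mult:
  "prod_list (map (\<lambda>x. f x * g x) xs) = prod_list (map f xs) * (prod_list (map g xs) :: 'a::comm_monoid_mult)"
  by (induction xs) (auto simp: mult_ac)

lemma abs_prod_list_map: "\<bar>prod_list (map f xs)\<bar> = prod_list (map (\<lambda>x. \<bar>f x\<bar>) xs :: real list)"
  by (induction xs) (auto simp: abs_mult)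

lemma abs_power_series_le_majorant:
  fixes d :: "('n::finite \<Rightarrow> nat) \<Rightarrow> real"
  assumes sum: "((\<lambda>\<alpha>. d \<alpha> * multi_pow v \<alpha>) has_sum y) UNIV"
    and majorant: "((\<lambda>\<alpha>. \<bar>d \<alpha>\<bar> * t ^ multi_deg \<alpha>) has_sum D) UNIV" and "norm v \<le> t"
  shows "\<bar>y\<bar> \<le> D"
proof -
  have le: "\<bar>d \<alpha> * multi_pow v \<alpha>\<bar> \<le> \<bar>d \<alpha>\<bar> * t ^ multi_deg \<alpha>" for \<alpha>
    unfolding abs_mult using \<open>norm v \<le> t\<close> by (intro mult_left_mono abs_multi_pow_le_norm) auto
  have abs_summable: "(\<lambda>\<alpha>. \<bar>d \<alpha> * multi_pow v \<alpha>\<bar>) summable_on UNIV"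
    using has_sum_imp_summable[OF sum] by (rule summable_on_abs_real)
  have "\<bar>y\<bar> \<le> infsum (\<lambda>\<alpha>. \<bar>d \<alpha> * multi_pow v \<alpha>\<bar>) UNIV"
    using norm_infsum_bound[of "\<lambda>\<alpha>. d \<alpha> * multi_pow v \<alpha>" UNIV] infsumI[OF sum] abs_summable by simp
  also have "\<dots> \<le> D"
    using infsum_mono[OF abs_summable has_sum_imp_summable[OF majorant] le] infsumI[OF majorant] by simp
  finally show ?thesis .
qed

text \<open>The \<open>n\<close>-th power of the series of \<open>h - h a\<close> is expanded as a sum over lists of
  \<open>n\<close> multi-indices; summed over all lengths this is an absolutely convergent multi-index series
  because the majorant of \<open>h - h a\<close> lies inside the radius of convergence of \<open>b\<close>.\<close>
lemma power_series_at_compose: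
  fixes h :: "real^'n::finite \<Rightarrow> real" and b :: "nat \<Rightarrow> real" and g :: "real \<Rightarrow> real"
  assumes h: "power_series_at h a" and R: "0 < R"
    and b_summable: "\<And>s. 0 \<le> s \<Longrightarrow> s < R \<Longrightarrow> summable (\<lambda>n. \<bar>b n\<bar> * s ^ n)"
    and g_series: "\<And>y. \<bar>y - h a\<bar> < R \<Longrightarrow> (\<lambda>n. b n * (y - h a) ^ n) sums g y"
  shows "power_series_at (\<lambda>x. g (h x)) a"
proof -
  have "0 < R / 2"
    using R by simp
  obtain t e D d where t: "0 < t" "0 < e" "e \<le> t" and "D \<le> R / 2"
    and D: "((\<lambda>\<alpha>. \<bar>d \<alpha>\<bar> * t ^ multi_deg \<alpha>) has_sum D) UNIV"
    and d_expansion: "\<forall>x\<in>ball a e. ((\<lambda>\<alpha>. d \<alpha> * multi_pow (x - a) \<alpha>) has_sum h x - h a) UNIV"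
    by (rule power_series_at_small_majorant[OF h \<open>0 < R / 2\<close>])
  have "D \<ge> 0"
    by (rule has_sum_nonneg[OF D]) (use t in simp)
  with \<open>D \<le> R / 2\<close> R have "D < R"
    by simp
  define c where "c xs = b (length xs) * prod_list (map d xs)" for xs
  define M where "M xs = \<bar>b (length xs)\<bar> * prod_list (map (\<lambda>\<alpha>. \<bar>d \<alpha>\<bar> * t ^ multi_deg \<alpha>) xs)" for xs
  have M_eq: "M xs = \<bar>c xs\<bar> * t ^ multi_deg (multi_index_sum xs)" for xs
    unfolding c_def M_def power_multi_deg_multi_index_sum abs_mult abs_prod_list_map prod_list_map_mult
    by simp
  have M_summable: "M summable_on UNIV"
    unfolding M_def[abs_def] using D b_summable[OF \<open>D \<ge> 0\<close> \<open>D < R\<close>] t(1)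
    by (intro summable_on_lists_majorant) auto
  have "((\<lambda>xs. c xs * multi_pow (x - a) (multi_index_sum xs)) has_sum g (h x)) UNIV"
    if x: "x \<in> ball a e" for x
  proof -
    define u where "u \<alpha> = d \<alpha> * multi_pow (x - a) \<alpha>" for \<alpha>
    have u: "(u has_sum h x - h a) UNIV"
      unfolding u_def using d_expansion x by blast
    have "norm (x - a) \<le> t"
      using x t by (simp add: dist_norm norm_minus_commute)
    with u[unfolded u_def] D have "\<bar>h x - h a\<bar> \<le> D"
      by (rule abs_power_series_le_majorant)
    then have "\<bar>h x - h a\<bar> < R"
      using \<open>D < R\<close> by simp
    have "summable (\<lambda>n. norm (b n * (h x - h a) ^ n))"
      using b_summable[OF abs_ge_zero \<open>\<bar>h x - h a\<bar> < R\<close>] by (simp add: abs_mult power_abs)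
    then have g_sum: "((\<lambda>n. b n * (h x - h a) ^ n) has_sum g (h x)) UNIV"
      using g_series[OF \<open>\<bar>h x - h a\<bar> < R\<close>] by (rule norm_summable_imp_has_sum)
    have c_eq: "c xs * multi_pow (x - a) (multi_index_sum xs) = b (length xs) * prod_list (map u xs)" for xs
      by (simp add: c_def u_def[abs_def] multi_pow_multi_index_sum prod_list_map_mult)
    have "(\<lambda>xs. norm (b (length xs) * prod_list (map u xs))) summable_on UNIV"
    proof (rule summable_on_comparison_test[OF M_summable])
      show "norm (b (length xs) * prod_list (map u xs)) \<le> M xs" for xs
        unfolding c_eq[symmetric] M_eq real_norm_def abs_mult
        by (intro mult_left_mono abs_multi_pow_le_norm \<open>norm (x - a) \<le> t\<close>) simp
    qed simp
    then have "(\<lambda>xs. b (length xs) * prod_list (map u xs)) summable_on UNIV"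
      by (rule abs_summable_summable)
    then have "((\<lambda>xs. b (length xs) * prod_list (map u xs)) has_sum g (h x)) UNIV"
      using u g_sum by (intro has_sum_lists_power_series)
    then show ?thesis
      by (simp add: c_eq)
  qed
  then show ?thesis
    using M_summable t by (intro power_series_at_regroup[where p = multi_index_sum and c = c and t = t and e = e])
      (simp_all add: M_eq[abs_def])
qed

lemma power_series_at_compose_binomial:
  assumes h: "power_series_at h a" and h0: "h a \<noteq> 0"
    and g: "\<And>y. \<bar>y - h a\<bar> < \<bar>h a\<bar> \<Longrightarrow> g y = C * (1 + (y - h a) / h a) powr p"
  shows "power_series_at (\<lambda>x. g (h x)) a"
proof (rule power_series_at_compose[OF h, where R = "\<bar>h a\<bar>" and b = "\<lambda>n. C * (p gchoose n) / h a ^ n"])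
  fix s :: real
  assume s: "0 \<le> s" "s < \<bar>h a\<bar>"
  define z where "z = s / \<bar>h a\<bar>"
  have z: "0 \<le> z" "z < 1"
    using s h0 by (auto simp: z_def)
  have "summable (\<lambda>n. (p gchoose n) * ((z + 1) / 2) ^ n)"
    using gen_binomial_real[of "(z + 1) / 2" p] z by (auto simp: sums_iff)
  then have "summable (\<lambda>n. norm ((p gchoose n) * z ^ n))"
    using z by (rule_tac powser_insidea) auto
  then have "summable (\<lambda>n. \<bar>C\<bar> * norm ((p gchoose n) * z ^ n))"
    by (rule summable_mult)
  then show "summable (\<lambda>n. \<bar>C * (p gchoose n) / h a ^ n\<bar> * s ^ n)"
    using h0 z by (simp add: z_def abs_mult power_divide power_abs mult.assoc)
next
  fix y
  assume y: "\<bar>y - h a\<bar> < \<bar>h a\<bar>"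
  then have "\<bar>(y - h a) / h a\<bar> < 1"
    using h0 by (simp add: abs_divide)
  from sums_mult[OF gen_binomial_real[OF this], of C] show "(\<lambda>n. C * (p gchoose n) / h a ^ n * (y - h a) ^ n) sums g y"
    using g[OF y] by (simp add: power_divide mult.assoc)
qed (use h0 in simp)

lemma power_series_at_sqrt:
  assumes h: "power_series_at h a" and h0: "h a > 0"
  shows "power_series_at (\<lambda>x. sqrt (h x)) a"
proof (rule power_series_at_compose_binomial[OF h, where C = "sqrt (h a)" and p = "1/2"])
  fix y
  assume "\<bar>y - h a\<bar> < \<bar>h a\<bar>"
  then have "y > 0" "y = h a * (1 + (y - h a) / h a)"
    using h0 by (auto simp: field_simps)
  then show "sqrt y = sqrt (h a) * (1 + (y - h a) / h a) powr (1/2)"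
    using h0 by (metis powr_half_sqrt real_sqrt_mult zero_less_mult_pos less_imp_le)
qed (use h0 in simp)

lemma power_series_at_inverse:
  assumes h: "power_series_at h a" and h0: "h a \<noteq> 0"
  shows "power_series_at (\<lambda>x. 1 / h x) a"
proof (rule power_series_at_compose_binomial[OF h h0, where C = "1 / h a" and p = "-1"])
  fix y
  define u where "u = (y - h a) / h a"
  assume "\<bar>y - h a\<bar> < \<bar>h a\<bar>"
  then have "\<bar>u\<bar> < 1"
    using h0 by (simp add: u_def abs_divide)
  then have pow: "(1 + (y - h a) / h a) powr (-1) = 1 / (1 + u)"
    by (simp add: u_def powr_minus divide_inverse)
  have "y = h a * (1 + u)"
    using h0 by (simp add: u_def field_simps)
  then show "1 / y = 1 / h a * (1 + (y - h a) / h a) powr (-1)"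
    unfolding pow by simp
qed

lemma power_series_at_inverse_sqrt_abs:
  assumes h: "power_series_at h a" and h0: "h a \<noteq> 0"
  shows "power_series_at (\<lambda>x. 1 / sqrt \<bar>h x\<bar>) a"
proof (rule power_series_at_compose_binomial[OF h h0, where C = "1 / sqrt \<bar>h a\<bar>" and p = "-1/2"])
  fix y
  define u where "u = (y - h a) / h a"
  assume "\<bar>y - h a\<bar> < \<bar>h a\<bar>"
  then have "\<bar>u\<bar> < 1"
    using h0 by (simp add: u_def abs_divide)
  moreover have "\<bar>y\<bar> = \<bar>h a\<bar> * \<bar>1 + u\<bar>"
    using h0 by (simp add: u_def field_simps abs_mult[symmetric])
  ultimately show "1 / sqrt \<bar>y\<bar> = 1 / sqrt \<bar>h a\<bar> * (1 + (y - h a) / h a) powr (-1/2)"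
    by (simp add: u_def[symmetric] powr_minus_divide powr_half_sqrt real_sqrt_mult)
qed

lemma power_series_has_derivative_at_0:
  fixes E :: "nat \<Rightarrow> real"
  assumes "0 < K" and series: "\<And>s. \<bar>s\<bar> \<le> K \<Longrightarrow> (\<lambda>i. E i * s ^ i) sums \<phi> s"
  shows "(\<phi> has_field_derivative E 1) (at 0)"
proof -
  have "summable (\<lambda>i. E i * K ^ i)"
    using series[of K] \<open>0 < K\<close> by (simp add: sums_iff)
  from termdiffs_strong[OF this, of 0] \<open>0 < K\<close>
  have "((\<lambda>s. \<Sum>i. E i * s ^ i) has_field_derivative E 1) (at 0)"
    by (simp add: diffs_def)
  then show ?thesis
    by (rule has_field_derivative_transform_within_open[where S = "ball 0 K"])
      (use \<open>0 < K\<close> series in \<open>auto simp: sums_iff\<close>)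
qed

lemma has_sum_binomial:
  "((\<lambda>i. of_nat (m choose i) * w ^ (m - i) * s ^ i) has_sum (w + s :: real) ^ m) UNIV"
  by (rule has_sum_finite_neutralI[where B = "{..m}"])
    (auto simp: binomial_ring[of s w m] add.commute mult_ac binomial_eq_0)

lemma of_nat_mult_half_power_le:
  assumes "0 \<le> t"
  shows "real n * (t / 2) ^ (n - 1) \<le> t ^ (n - 1)"
proof (cases "n = 0")
  case False
  then have "real n \<le> 2 ^ (n - 1)"
    using less_exp[of "n - 1"] by (metis Suc_pred' Suc_le_eq not_gr_zero of_nat_le_iff of_nat_numeral of_nat_power)
  then have "real n * (t / 2) ^ (n - 1) \<le> 2 ^ (n - 1) * (t / 2) ^ (n - 1)"
    using assms by (intro mult_right_mono) auto
  also have "\<dots> = t ^ (n - 1)"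
    by (simp add: power_divide)
  finally show ?thesis .
qed simp

text \<open>The formal partial derivative in direction \<open>j\<close> has a majorant at half the radius, since
  \<open>\<alpha> j * (t/2)^(n-1) \<le> t^(n-1)\<close> whenever \<open>\<alpha> j \<le> n\<close>.\<close>
lemma derivative_majorant_summable:
  fixes c :: "('n::finite \<Rightarrow> nat) \<Rightarrow> real"
  assumes "0 < t" and majorant: "(\<lambda>\<alpha>. \<bar>c \<alpha>\<bar> * t ^ multi_deg \<alpha>) summable_on UNIV"
  shows "(\<lambda>\<alpha>. \<bar>c \<alpha> * of_nat (\<alpha> j)\<bar> * (t / 2) ^ multi_deg (\<alpha>(j := \<alpha> j - 1)))
           summable_on UNIV"
proof (rule summable_on_comparison_test[OF summable_on_cmult_left[OF majorant, of "1 / t"]])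
  fix \<alpha> :: "'n \<Rightarrow> nat"
  show "\<bar>c \<alpha> * of_nat (\<alpha> j)\<bar> * (t / 2) ^ multi_deg (\<alpha>(j := \<alpha> j - 1))
      \<le> \<bar>c \<alpha>\<bar> * t ^ multi_deg \<alpha> * (1 / t)"
  proof (cases "\<alpha> j = 0")
    case False
    have deg: "multi_deg (\<alpha>(j := \<alpha> j - 1)) = multi_deg \<alpha> - 1" "\<alpha> j \<le> multi_deg \<alpha>"
      using multi_deg_split[of "\<alpha>(j := \<alpha> j - 1)" j] multi_deg_split[of \<alpha> j] False by auto
    have "real (\<alpha> j) * (t / 2) ^ (multi_deg \<alpha> - 1) \<le> real (multi_deg \<alpha>) * (t / 2) ^ (multi_deg \<alpha> - 1)"
      using deg \<open>0 < t\<close> by (intro mult_right_mono) auto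
    also have "\<dots> \<le> t ^ (multi_deg \<alpha> - 1)"
      using \<open>0 < t\<close> by (intro of_nat_mult_half_power_le) auto
    also have "\<dots> = t ^ multi_deg \<alpha> * (1 / t)"
      using deg False \<open>0 < t\<close> by (simp add: power_diff)
    finally have "real (\<alpha> j) * (t / 2) ^ (multi_deg \<alpha> - 1) \<le> t ^ multi_deg \<alpha> * (1 / t)" .
    from mult_left_mono[OF this abs_ge_zero[of "c \<alpha>"]] show ?thesis
      unfolding deg(1) by (simp add: abs_mult mult_ac)
  qed (use \<open>0 < t\<close> in simp)
qed (use \<open>0 < t\<close> in auto)

lemma power_series_of_double_series:
  fixes a :: "'a \<Rightarrow> nat \<Rightarrow> real"
  assumes "0 < K" and double: "\<And>s. \<bar>s\<bar> \<le> K \<Longrightarrow> ((\<lambda>(\<alpha>, i). a \<alpha> i * s ^ i) has_sum \<phi> s) (UNIV \<times> UNIV)"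
  shows "(\<lambda>\<alpha>. a \<alpha> i) summable_on UNIV"
    and "\<bar>s\<bar> \<le> K \<Longrightarrow> (\<lambda>i. infsum (\<lambda>\<alpha>. a \<alpha> i) UNIV * s ^ i) sums \<phi> s"
proof -
  have summable: "(\<lambda>\<alpha>. a \<alpha> i) summable_on UNIV" for i
  proof -
    have "(\<lambda>(\<alpha>, i). a \<alpha> i * K ^ i) summable_on UNIV \<times> UNIV"
      using double[of K] \<open>0 < K\<close> by (simp add: has_sum_imp_summable)
    then have "(\<lambda>(i, \<alpha>). a \<alpha> i * K ^ i) summable_on UNIV \<times> UNIV"
      by (subst summable_on_swap) (simp add: case_prod_unfold)
    then have "(\<lambda>\<alpha>. a \<alpha> i * K ^ i) summable_on UNIV"
      using summable_on_SigmaD1[of "\<lambda>i \<alpha>. a \<alpha> i * K ^ i" UNIV "\<lambda>_. UNIV" i] by simp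
    then have "(\<lambda>\<alpha>. a \<alpha> i * K ^ i * (1 / K ^ i)) summable_on UNIV"
      by (rule summable_on_cmult_left)
    then show ?thesis
      using \<open>0 < K\<close> by simp
  qed
  then show "(\<lambda>\<alpha>. a \<alpha> i) summable_on UNIV" .
  assume "\<bar>s\<bar> \<le> K"
  have "((\<lambda>(i, \<alpha>). a \<alpha> i * s ^ i) has_sum \<phi> s) (UNIV \<times> UNIV)"
    using has_sum_swap[THEN iffD1, OF double[OF \<open>\<bar>s\<bar> \<le> K\<close>]] by (simp add: case_prod_unfold)
  then have "((\<lambda>i. infsum (\<lambda>\<alpha>. a \<alpha> i) UNIV * s ^ i) has_sum \<phi> s) UNIV"
  proof (rule has_sum_SigmaD)
    show "((\<lambda>\<alpha>. (\<lambda>(i, \<alpha>). a \<alpha> i * s ^ i) (i, \<alpha>)) has_sum infsum (\<lambda>\<alpha>. a \<alpha> i) UNIV * s ^ i) UNIV" for i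
      using summable[of i] by (simp add: has_sum_cmult_left)
  qed
  then show "(\<lambda>i. infsum (\<lambda>\<alpha>. a \<alpha> i) UNIV * s ^ i) sums \<phi> s"
    by (rule has_sum_imp_sums)
qed

definition axis_coeff :: "(('n::finite \<Rightarrow> nat) \<Rightarrow> real) \<Rightarrow> real^'n \<Rightarrow> 'n \<Rightarrow> ('n \<Rightarrow> nat) \<Rightarrow> nat \<Rightarrow> real"
  where "axis_coeff c v j \<alpha> i = c \<alpha> * multi_pow v (\<alpha>(j := 0)) * of_nat (\<alpha> j choose i) * v$j ^ (\<alpha> j - i)"

lemma has_sum_axis_coeff:
  "((\<lambda>i. axis_coeff c v j \<alpha> i * s ^ i) has_sum c \<alpha> * multi_pow (v + s *\<^sub>R axis j 1) \<alpha>) UNIV"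
proof -
  have "(v + s *\<^sub>R axis j 1) $ j = v$j + s"
    by (simp add: axis_def)
  then show ?thesis
    using has_sum_cmult_right[OF has_sum_binomial[of "\<alpha> j" "v$j" s], of "c \<alpha> * multi_pow v (\<alpha>(j := 0))"]
    by (simp add: axis_coeff_def multi_pow_split[of _ \<alpha> j] multi_pow_translate_axis mult_ac)
qed

lemma axis_coeff_1: "axis_coeff c v j \<alpha> 1 = c \<alpha> * of_nat (\<alpha> j) * multi_pow v (\<alpha>(j := \<alpha> j - 1))"
  using multi_pow_split[of v "\<alpha>(j := \<alpha> j - 1)" j] by (simp add: axis_coeff_def mult_ac)

lemma summable_on_axis_coeff:
  fixes c :: "('n::finite \<Rightarrow> nat) \<Rightarrow> real"
  assumes majorant: "(\<lambda>\<alpha>. \<bar>c \<alpha>\<bar> * t ^ multi_deg \<alpha>) summable_on UNIV"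
    and v: "\<And>k. \<bar>v$k\<bar> \<le> t" and s: "\<bar>v$j\<bar> + \<bar>s\<bar> \<le> t"
  shows "(\<lambda>(\<alpha>, i). axis_coeff c v j \<alpha> i * s ^ i) summable_on UNIV \<times> UNIV"
proof -
  define g where "g \<alpha> = \<bar>c \<alpha>\<bar> * (\<bar>multi_pow v (\<alpha>(j := 0))\<bar> * (\<bar>v$j\<bar> + \<bar>s\<bar>) ^ \<alpha> j)" for \<alpha>
  have "((\<lambda>i. \<bar>axis_coeff c v j \<alpha> i * s ^ i\<bar>) has_sum g \<alpha>) UNIV" for \<alpha>
    using has_sum_cmult_right[OF has_sum_binomial[of "\<alpha> j" "\<bar>v$j\<bar>" "\<bar>s\<bar>"],
        of "\<bar>c \<alpha>\<bar> * \<bar>multi_pow v (\<alpha>(j := 0))\<bar>"]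
    by (simp add: axis_coeff_def g_def abs_mult power_abs mult_ac)
  moreover have "g summable_on UNIV"
  proof (rule summable_on_comparison_test[OF majorant])
    fix \<alpha> :: "'n \<Rightarrow> nat"
    have "(\<bar>v$j\<bar> + \<bar>s\<bar>) ^ \<alpha> j \<le> t ^ \<alpha> j"
      using s by (rule power_mono) simp
    with abs_multi_pow_le[OF v]
    have "\<bar>multi_pow v (\<alpha>(j := 0))\<bar> * (\<bar>v$j\<bar> + \<bar>s\<bar>) ^ \<alpha> j \<le> t ^ multi_deg (\<alpha>(j := 0)) * t ^ \<alpha> j"
      by (rule mult_mono) (use s in simp_all)
    also have "\<dots> = t ^ multi_deg \<alpha>"
      by (simp add: multi_deg_split[of \<alpha> j] power_add)
    finally show "g \<alpha> \<le> \<bar>c \<alpha>\<bar> * t ^ multi_deg \<alpha>"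
      unfolding g_def by (rule mult_left_mono) simp
  qed (simp add: g_def)
  ultimately have "(\<lambda>(\<alpha>, i). \<bar>axis_coeff c v j \<alpha> i * s ^ i\<bar>) summable_on Sigma UNIV (\<lambda>_. UNIV)"
    by (intro summable_on_SigmaI[where g = g]) auto
  then have "(\<lambda>p. norm ((\<lambda>(\<alpha>, i). axis_coeff c v j \<alpha> i * s ^ i) p)) summable_on UNIV \<times> UNIV"
    by (simp add: case_prod_unfold)
  then show ?thesis
    by (rule abs_summable_summable)
qed

text \<open>Summing the binomial expansion over \<open>\<alpha>\<close> first turns the restriction of \<open>f\<close> to the line
  through \<open>x\<close> in direction \<open>j\<close> into a power series in \<open>s\<close>, whose linear coefficient is the formal
  partial derivative at \<open>x\<close>.\<close>
lemma power_series_along_axis: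
  fixes c :: "('n::finite \<Rightarrow> nat) \<Rightarrow> real"
  assumes t: "0 < t" and majorant: "(\<lambda>\<alpha>. \<bar>c \<alpha>\<bar> * t ^ multi_deg \<alpha>) summable_on UNIV"
    and expansion: "\<And>y. y \<in> ball a t \<Longrightarrow> ((\<lambda>\<alpha>. c \<alpha> * multi_pow (y - a) \<alpha>) has_sum f y) UNIV"
    and x: "norm (x - a) < t / 4"
  shows "\<exists>E. (\<forall>s. \<bar>s\<bar> \<le> t / 4 \<longrightarrow> (\<lambda>i. E i * s ^ i) sums f (x + s *\<^sub>R axis j 1)) \<and>
    ((\<lambda>\<alpha>. c \<alpha> * of_nat (\<alpha> j) * multi_pow (x - a) (\<alpha>(j := \<alpha> j - 1))) has_sum E 1) UNIV"
proof -
  define v where "v = x - a"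
  have v: "\<bar>v$k\<bar> < t / 4" for k
    using component_le_norm_cart[of v k] x by (simp add: v_def)
  have double: "((\<lambda>(\<alpha>, i). axis_coeff c v j \<alpha> i * s ^ i) has_sum f (x + s *\<^sub>R axis j 1)) (UNIV \<times> UNIV)"
    if s: "\<bar>s\<bar> \<le> t / 4" for s
  proof (rule has_sum_SigmaI)
    have "norm (v + s *\<^sub>R axis j 1) \<le> norm v + \<bar>s\<bar>"
      using norm_triangle_ineq[of v "s *\<^sub>R axis j 1"] by simp
    also have "\<dots> < t"
      using x s t by (simp add: v_def)
    finally have "dist (x + s *\<^sub>R axis j 1) a < t"
      by (simp add: dist_norm v_def algebra_simps)
    then have "((\<lambda>\<alpha>. c \<alpha> * multi_pow (x + s *\<^sub>R axis j 1 - a) \<alpha>) has_sum f (x + s *\<^sub>R axis j 1)) UNIV"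
      by (intro expansion) (simp add: dist_commute)
    then show "((\<lambda>\<alpha>. c \<alpha> * multi_pow (v + s *\<^sub>R axis j 1) \<alpha>) has_sum f (x + s *\<^sub>R axis j 1)) UNIV"
      by (simp add: v_def algebra_simps)
    show "((\<lambda>i. (\<lambda>(\<alpha>, i). axis_coeff c v j \<alpha> i * s ^ i) (\<alpha>, i)) has_sum
        c \<alpha> * multi_pow (v + s *\<^sub>R axis j 1) \<alpha>) UNIV" for \<alpha>
      using has_sum_axis_coeff by simp
    show "(\<lambda>(\<alpha>, i). axis_coeff c v j \<alpha> i * s ^ i) summable_on UNIV \<times> UNIV"
    proof (rule summable_on_axis_coeff[OF majorant])
      show "\<bar>v$k\<bar> \<le> t" for k
        using v[of k] t by linarith
      show "\<bar>v$j\<bar> + \<bar>s\<bar> \<le> t"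
        using v[of j] s t by linarith
    qed
  qed
  have "0 < t / 4"
    using t by simp
  note series = power_series_of_double_series[OF this double]
  define E where "E i = infsum (\<lambda>\<alpha>. axis_coeff c v j \<alpha> i) UNIV" for i
  have "((\<lambda>\<alpha>. axis_coeff c v j \<alpha> 1) has_sum E 1) UNIV"
    using series(1) by (simp add: E_def)
  then have "((\<lambda>\<alpha>. c \<alpha> * of_nat (\<alpha> j) * multi_pow (x - a) (\<alpha>(j := \<alpha> j - 1))) has_sum E 1) UNIV"
    by (simp only: axis_coeff_1 v_def)
  moreover have "\<forall>s. \<bar>s\<bar> \<le> t / 4 \<longrightarrow> (\<lambda>i. E i * s ^ i) sums f (x + s *\<^sub>R axis j 1)"
    using series(2) by (simp add: E_def)
  ultimately show ?thesis
    by blast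
qed

lemma summable_on_formal_derivative:
  fixes c :: "('n::finite \<Rightarrow> nat) \<Rightarrow> real"
  assumes "0 < t" and majorant: "(\<lambda>\<alpha>. \<bar>c \<alpha>\<bar> * t ^ multi_deg \<alpha>) summable_on UNIV"
    and "norm v \<le> t / 2"
  shows "(\<lambda>\<alpha>. c \<alpha> * of_nat (\<alpha> j) * multi_pow v (\<alpha>(j := \<alpha> j - 1))) summable_on UNIV"
proof (rule abs_summable_summable)
  have "norm (c \<alpha> * of_nat (\<alpha> j) * multi_pow v (\<alpha>(j := \<alpha> j - 1)))
      \<le> \<bar>c \<alpha> * of_nat (\<alpha> j)\<bar> * (t / 2) ^ multi_deg (\<alpha>(j := \<alpha> j - 1))" for \<alpha>
    unfolding real_norm_def abs_mult[of "c \<alpha> * of_nat (\<alpha> j)"]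
    using \<open>norm v \<le> t / 2\<close> by (intro mult_left_mono abs_multi_pow_le_norm) simp_all
  then show "(\<lambda>\<alpha>. norm (c \<alpha> * of_nat (\<alpha> j) * multi_pow v (\<alpha>(j := \<alpha> j - 1)))) summable_on UNIV"
    by (intro summable_on_comparison_test[OF derivative_majorant_summable[OF \<open>0 < t\<close> majorant]])
      simp_all
qed

lemma power_series_at_partial_derivative:
  assumes "power_series_at f a"
  shows "\<exists>e>0. \<exists>D. power_series_at D a \<and>
    (\<forall>x\<in>ball a e. ((\<lambda>s. f (x + s *\<^sub>R axis j 1)) has_field_derivative D x) (at 0))"
proof -
  obtain c t where "0 < t" and majorant: "(\<lambda>\<alpha>. \<bar>c \<alpha>\<bar> * t ^ multi_deg \<alpha>) summable_on UNIV"
    and expansion: "\<forall>x\<in>ball a t. ((\<lambda>\<alpha>. c \<alpha> * multi_pow (x - a) \<alpha>) has_sum f x) UNIV"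
    using power_series_at_same_radius[OF assms] by blast
  define c' where "c' \<alpha> = c \<alpha> * of_nat (\<alpha> j)" for \<alpha>
  define p where "p \<alpha> = \<alpha>(j := \<alpha> j - 1)" for \<alpha> :: "'a \<Rightarrow> nat"
  define D where "D x = infsum (\<lambda>\<alpha>. c' \<alpha> * multi_pow (x - a) (p \<alpha>)) UNIV" for x
  have D: "((\<lambda>\<alpha>. c' \<alpha> * multi_pow (x - a) (p \<alpha>)) has_sum D x) UNIV" if "x \<in> ball a (t / 2)" for x
    using that summable_on_formal_derivative[OF \<open>0 < t\<close> majorant, of "x - a" j]
    by (simp add: D_def c'_def p_def dist_norm norm_minus_commute)
  have "power_series_at D a"
    using \<open>0 < t\<close> derivative_majorant_summable[OF \<open>0 < t\<close> majorant] D
    by (intro power_series_at_regroup[where c = c' and p = p and t = "t / 2" and e = "t / 2"])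
      (simp_all add: c'_def p_def)
  moreover have "((\<lambda>s. f (x + s *\<^sub>R axis j 1)) has_field_derivative D x) (at 0)"
    if x: "x \<in> ball a (t / 4)" for x
  proof -
    have "norm (x - a) < t / 4"
      using x by (simp add: dist_norm norm_minus_commute)
    then obtain E where E: "\<forall>s. \<bar>s\<bar> \<le> t / 4 \<longrightarrow> (\<lambda>i. E i * s ^ i) sums f (x + s *\<^sub>R axis j 1)"
      and E1: "((\<lambda>\<alpha>. c' \<alpha> * multi_pow (x - a) (p \<alpha>)) has_sum E 1) UNIV"
      unfolding c'_def p_def using power_series_along_axis[OF \<open>0 < t\<close> majorant] expansion by blast
    have "E 1 = D x"
      using has_sum_unique[OF E1 D] x \<open>0 < t\<close> by simp
    then show ?thesis
      using power_series_has_derivative_at_0[of "t / 4" E] E \<open>0 < t\<close> by simp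
  qed
  ultimately show ?thesis
    using \<open>0 < t\<close> by (intro exI[of _ "t / 4"]) auto
qed

section \<open>Real-analytic functions of three variables\<close>

lemma multi_pow_diff: "multi_pow (x - a) \<alpha> = (\<Prod>k\<in>UNIV. (x$k - a$k) ^ \<alpha> k)"
  by (simp add: multi_pow_def)

lemma real_analytic_on_iff_power_series_at:
  "real_analytic_on f U \<longleftrightarrow> (\<forall>a\<in>U. power_series_at f a)"
proof
  assume analytic: "real_analytic_on f U"
  show "\<forall>a\<in>U. power_series_at f a"
  proof
    fix a
    assume "a \<in> U"
    then obtain c e where "e > 0"
      and expansion: "\<forall>x\<in>ball a e. ((\<lambda>\<alpha>. c \<alpha> * multi_pow (x - a) \<alpha>) has_sum f x) UNIV"
      using analytic unfolding real_analytic_on_def multi_pow_diff by blast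
    define t where "t = e / 4"
    define x0 where "x0 = a + (\<chi> k. t)"
    have "norm (\<chi> k::3. t) \<le> (\<Sum>k\<in>UNIV. \<bar>(\<chi> k::3. t) $ k\<bar>)"
      by (rule norm_le_l1_cart)
    also have "\<dots> < e"
      using \<open>e > 0\<close> by (simp add: t_def)
    finally have "x0 \<in> ball a e"
      by (simp add: x0_def dist_norm)
    then have "(\<lambda>\<alpha>. \<bar>c \<alpha> * multi_pow (x0 - a) \<alpha>\<bar>) summable_on UNIV"
      using expansion has_sum_imp_summable summable_on_abs_real by blast
    moreover have "multi_pow (x0 - a) \<alpha> = t ^ multi_deg \<alpha>" for \<alpha>
      by (simp add: x0_def multi_pow_def multi_deg_def power_sum)
    ultimately have "(\<lambda>\<alpha>. \<bar>c \<alpha>\<bar> * t ^ multi_deg \<alpha>) summable_on UNIV"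
      using \<open>e > 0\<close> by (simp add: abs_mult t_def)
    then show "power_series_at f a"
      using \<open>e > 0\<close> expansion by (intro power_series_atI[of t e]) (auto simp: t_def)
  qed
next
  assume series: "\<forall>a\<in>U. power_series_at f a"
  show "real_analytic_on f U"
    unfolding real_analytic_on_def multi_pow_diff[symmetric]
  proof
    fix a
    assume "a \<in> U"
    then have "power_series_at f a"
      using series by blast
    then obtain c t e where "0 < e"
      "\<And>x. x \<in> ball a e \<Longrightarrow> ((\<lambda>\<alpha>. c \<alpha> * multi_pow (x - a) \<alpha>) has_sum f x) UNIV"
      by (elim power_series_atE) blast
    then show "\<exists>c. \<exists>e>0. \<forall>x\<in>ball a e. ((\<lambda>\<alpha>. c \<alpha> * multi_pow (x - a) \<alpha>) has_sum f x) UNIV"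
      by blast
  qed
qed

lemma real_analytic_on_const: "real_analytic_on (\<lambda>x. k) U"
  by (simp add: real_analytic_on_iff_power_series_at power_series_at_const)

lemma real_analytic_on_component: "real_analytic_on (\<lambda>x. x $ j) U"
  by (simp add: real_analytic_on_iff_power_series_at power_series_at_coord)

lemma real_analytic_on_add:
  "real_analytic_on f U \<Longrightarrow> real_analytic_on g U \<Longrightarrow> real_analytic_on (\<lambda>x. f x + g x) U"
  by (simp add: real_analytic_on_iff_power_series_at power_series_at_add)

lemma real_analytic_on_diff:
  "real_analytic_on f U \<Longrightarrow> real_analytic_on g U \<Longrightarrow> real_analytic_on (\<lambda>x. f x - g x) U"
  by (simp add: real_analytic_on_iff_power_series_at power_series_at_diff)

lemma real_analytic_on_minus:
  "real_analytic_on f U \<Longrightarrow> real_analytic_on (\<lambda>x. - f x) U"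
  by (simp add: real_analytic_on_iff_power_series_at power_series_at_minus)

lemma real_analytic_on_mult:
  "real_analytic_on f U \<Longrightarrow> real_analytic_on g U \<Longrightarrow> real_analytic_on (\<lambda>x. f x * g x) U"
  by (simp add: real_analytic_on_iff_power_series_at power_series_at_mult)

lemma real_analytic_on_sum:
  "finite S \<Longrightarrow> (\<And>i. i \<in> S \<Longrightarrow> real_analytic_on (f i) U) \<Longrightarrow> real_analytic_on (\<lambda>x. \<Sum>i\<in>S. f i x) U"
  by (simp add: real_analytic_on_iff_power_series_at power_series_at_sum)

lemma real_analytic_on_prod:
  "finite S \<Longrightarrow> (\<And>i. i \<in> S \<Longrightarrow> real_analytic_on (f i) U) \<Longrightarrow> real_analytic_on (\<lambda>x. \<Prod>i\<in>S. f i x) U"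
  by (simp add: real_analytic_on_iff_power_series_at power_series_at_prod)

lemma real_analytic_on_sqrt:
  "real_analytic_on f U \<Longrightarrow> (\<And>x. x \<in> U \<Longrightarrow> f x > 0) \<Longrightarrow> real_analytic_on (\<lambda>x. sqrt (f x)) U"
  by (simp add: real_analytic_on_iff_power_series_at power_series_at_sqrt)

lemma real_analytic_on_power: "real_analytic_on f U \<Longrightarrow> real_analytic_on (\<lambda>x. f x ^ n) U"
  by (induction n) (simp_all add: real_analytic_on_const real_analytic_on_mult)

lemma real_analytic_on_divide:
  assumes "real_analytic_on f U" "real_analytic_on g U" "\<And>x. x \<in> U \<Longrightarrow> g x \<noteq> 0"
  shows "real_analytic_on (\<lambda>x. f x / g x) U"
proof -
  have "power_series_at (\<lambda>x. f x * (1 / g x)) a" if "a \<in> U" for a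
    using assms that unfolding real_analytic_on_iff_power_series_at
    by (intro power_series_at_mult power_series_at_inverse) auto
  then show ?thesis
    by (simp add: real_analytic_on_iff_power_series_at)
qed

lemma real_analytic_on_inverse_sqrt_abs:
  "real_analytic_on f U \<Longrightarrow> (\<And>x. x \<in> U \<Longrightarrow> f x \<noteq> 0) \<Longrightarrow> real_analytic_on (\<lambda>x. 1 / sqrt \<bar>f x\<bar>) U"
  by (simp add: real_analytic_on_iff_power_series_at power_series_at_inverse_sqrt_abs)

lemma real_analytic_on_cong:
  assumes "real_analytic_on f U" "open U" "\<And>x. x \<in> U \<Longrightarrow> f x = g x"
  shows "real_analytic_on g U"
  unfolding real_analytic_on_iff_power_series_at
proof
  fix a
  assume "a \<in> U"
  then obtain d where "d > 0" "ball a d \<subseteq> U"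
    using \<open>open U\<close> open_contains_ball by blast
  then show "power_series_at g a"
    using assms(1,3) \<open>a \<in> U\<close> by (rule_tac power_series_at_cong[of f a d]) (auto simp: real_analytic_on_iff_power_series_at)
qed

lemma real_analytic_on_norm_power2: "real_analytic_on (\<lambda>x. (norm x)\<^sup>2) U"
proof -
  have "real_analytic_on (\<lambda>x::real^3. \<Sum>k\<in>UNIV. x $ k * x $ k) U"
    by (intro real_analytic_on_sum real_analytic_on_mult real_analytic_on_component) simp
  then show ?thesis
    by (simp add: power2_norm_eq_inner inner_vec_def)
qed

lemma power_series_at_pd:
  assumes "power_series_at f a"
  shows "\<exists>e>0. power_series_at (pd f j) a \<and>
    (\<forall>x\<in>ball a e. ((\<lambda>s. f (x + s *\<^sub>R axis j 1)) has_field_derivative pd f j x) (at 0))"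
proof -
  obtain e D where "0 < e" "power_series_at D a"
    and D: "\<forall>x\<in>ball a e. ((\<lambda>s. f (x + s *\<^sub>R axis j 1)) has_field_derivative D x) (at 0)"
    using power_series_at_partial_derivative[OF assms, of j] by blast
  have pd_eq: "D x = pd f j x" if "x \<in> ball a e" for x
    unfolding pd_def using D that by (intro DERIV_imp_deriv[symmetric]) blast
  have "power_series_at (pd f j) a"
    using \<open>power_series_at D a\<close> \<open>0 < e\<close> pd_eq by (rule power_series_at_cong)
  moreover have "\<forall>x\<in>ball a e. ((\<lambda>s. f (x + s *\<^sub>R axis j 1)) has_field_derivative pd f j x) (at 0)"
    using D pd_eq by simp
  ultimately show ?thesis
    using \<open>0 < e\<close> by blast
qed

lemma real_analytic_on_pd:
  "real_analytic_on f U \<Longrightarrow> real_analytic_on (pd f j) U"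
  unfolding real_analytic_on_iff_power_series_at using power_series_at_pd by blast

lemma has_field_derivative_pd:
  assumes "real_analytic_on f U" "x \<in> U"
  shows "((\<lambda>s. f (x + s *\<^sub>R axis j 1)) has_field_derivative pd f j x) (at 0)"
proof -
  have "power_series_at f x"
    using assms by (simp add: real_analytic_on_iff_power_series_at)
  then obtain e where "0 < e"
    and "\<forall>y\<in>ball x e. ((\<lambda>s. f (y + s *\<^sub>R axis j 1)) has_field_derivative pd f j y) (at 0)"
    using power_series_at_pd[of f x j] by blast
  then show ?thesis
    by simp
qed

lemma real_analytic_on_det:
  fixes A :: "real^3 \<Rightarrow> real^'n^'n"
  assumes "\<And>i k. real_analytic_on (\<lambda>x. A x $ i $ k) U"
  shows "real_analytic_on (\<lambda>x. det (A x)) U"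
  unfolding det_def
  by (intro real_analytic_on_sum real_analytic_on_mult real_analytic_on_const real_analytic_on_prod)
    (simp_all add: assms finite_permutations)

lemma det_nonzero_if_pos_def:
  fixes A :: "real^'n^'n"
  assumes "\<forall>v. v \<noteq> 0 \<longrightarrow> v \<bullet> (A *v v) > 0"
  shows "det A \<noteq> 0"
proof
  assume "det A = 0"
  then have "\<not> (\<exists>B. B ** A = mat 1)"
    using invertible_det_nz invertible_left_inverse by blast
  then obtain v where "A *v v = 0" "v \<noteq> 0"
    using matrix_left_invertible_ker by blast
  then show False
    using assms by fastforce
qed

lemma invertible_matrix_inv:
  fixes A :: "'a::semiring_1^'n^'n"
  assumes "invertible A"
  shows "A ** matrix_inv A = mat 1" "matrix_inv A ** A = mat 1"
proof -
  have "\<exists>A'. A ** A' = mat 1 \<and> A' ** A = mat 1"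
    using assms unfolding invertible_def by blast
  from someI_ex[OF this] show "A ** matrix_inv A = mat 1" "matrix_inv A ** A = mat 1"
    unfolding matrix_inv_def by simp_all
qed

lemma matrix_inv_mult_vector_cramer:
  fixes A :: "real^'n^'n"
  assumes "det A \<noteq> 0"
  shows "matrix_inv A *v b = (\<chi> k. det (\<chi> i j. if j = k then b$i else A$i$j) / det A)"
proof -
  have "invertible A"
    using assms invertible_det_nz by blast
  then have "A *v (matrix_inv A *v b) = b"
    by (simp add: matrix_vector_mul_assoc invertible_matrix_inv)
  then show ?thesis
    using cramer[OF assms] by blast
qed

lemma real_analytic_on_matrix_inv_mult_vector:
  fixes A :: "real^3 \<Rightarrow> real^'n^'n"
  assumes "open U" "\<And>i k. real_analytic_on (\<lambda>x. A x $ i $ k) U" "\<And>x. x \<in> U \<Longrightarrow> det (A x) \<noteq> 0"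
    and "\<And>i. real_analytic_on (\<lambda>x. w x $ i) U"
  shows "real_analytic_on (\<lambda>x. (matrix_inv (A x) *v w x) $ k) U"
proof (rule real_analytic_on_cong[OF _ \<open>open U\<close>])
  have "real_analytic_on (\<lambda>x. (\<chi> i l. if l = k then w x $ i else A x $ i $ l) $ i $ l) U" for i l
    by (cases "l = k") (simp_all add: assms)
  then show "real_analytic_on (\<lambda>x. det (\<chi> i l. if l = k then w x $ i else A x $ i $ l) / det (A x)) U"
    using assms(2,3) by (intro real_analytic_on_divide real_analytic_on_det)
  show "det (\<chi> i l. if l = k then w x $ i else A x $ i $ l) / det (A x) = (matrix_inv (A x) *v w x) $ k"
    if "x \<in> U" for x
    using matrix_inv_mult_vector_cramer[OF assms(3)[OF that]] by simp
qed

section \<open>The current\<close>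

lemma has_field_derivative_norm_along_axis:
  fixes x :: "real^'n"
  assumes "x \<noteq> 0"
  shows "((\<lambda>s. norm (x + s *\<^sub>R axis j 1)) has_field_derivative x $ j / norm x) (at 0)"
proof -
  have "((\<lambda>s. x + s *\<^sub>R axis j (1::real)) has_derivative (\<lambda>s. s *\<^sub>R axis j 1)) (at 0)"
    by (auto intro!: derivative_eq_intros)
  moreover have "(norm has_derivative (\<lambda>h. h \<bullet> sgn x)) (at (x + 0 *\<^sub>R axis j 1))"
    using has_derivative_norm[OF assms] by simp
  ultimately have "((\<lambda>s. norm (x + s *\<^sub>R axis j 1)) has_derivative (\<lambda>s. (s *\<^sub>R axis j 1) \<bullet> sgn x)) (at 0)"
    by (rule has_derivative_compose)
  then show ?thesis
    by (rule has_derivative_imp_has_field_derivative) (simp add: sgn_div_norm inner_axis' divide_inverse)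
qed

lemma pd_divide_norm:
  fixes F g :: "real^3 \<Rightarrow> real"
  assumes "open U" "x \<in> U" "x \<noteq> 0"
    and g: "\<And>y. y \<in> U \<Longrightarrow> g y = F y / norm y"
    and F: "((\<lambda>s. F (x + s *\<^sub>R axis j 1)) has_field_derivative F') (at 0)"
  shows "pd g j x = F' / norm x - F x * x $ j / norm x ^ 3"
proof -
  have "((\<lambda>s. F (x + s *\<^sub>R axis j 1) / norm (x + s *\<^sub>R axis j 1)) has_field_derivative
      (F' * norm x - F x * (x $ j / norm x)) / (norm x * norm x)) (at 0)"
    using DERIV_divide[OF F has_field_derivative_norm_along_axis[OF \<open>x \<noteq> 0\<close>]] \<open>x \<noteq> 0\<close> by simp
  then have quotient: "((\<lambda>s. F (x + s *\<^sub>R axis j 1) / norm (x + s *\<^sub>R axis j 1)) has_field_derivative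
      F' / norm x - F x * x $ j / norm x ^ 3) (at 0)"
    using \<open>x \<noteq> 0\<close> by (simp add: field_simps power3_eq_cube)
  define S where "S = (\<lambda>s. x + s *\<^sub>R axis j (1::real)) -` U"
  have "open S"
    unfolding S_def using \<open>open U\<close> by (intro continuous_open_vimage) (auto intro!: continuous_intros)
  moreover have "0 \<in> S"
    using \<open>x \<in> U\<close> by (simp add: S_def)
  ultimately have "((\<lambda>s. g (x + s *\<^sub>R axis j 1)) has_field_derivative
      F' / norm x - F x * x $ j / norm x ^ 3) (at 0)"
    by (rule has_field_derivative_transform_within_open[OF quotient]) (simp_all add: S_def g)
  then show ?thesis
    unfolding pd_def by (rule DERIV_imp_deriv)
qed

lemma phiK_eq_divide_norm:
  assumes "\<Omega> x = (norm x)\<^sup>2 * f\<Omega> x" "f\<Omega> x > 0"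
  shows "phiK \<Omega> phiM phiS x =
    sqrt ((norm x)\<^sup>2 * f\<Omega> x * ((phiM x)\<^sup>2 + (phiS x)\<^sup>2) + 1/4) / sqrt (f\<Omega> x) / norm x"
  using assms by (simp add: phiK_def real_sqrt_mult mult.assoc)

lemma J3_eq:
  fixes F :: "real^3 \<Rightarrow> real"
  assumes "open U" "x \<in> U" "x \<noteq> 0"
    and phiK: "\<And>y. y \<in> U \<Longrightarrow> phiK \<Omega> phiM phiS y = F y / norm y"
    and F: "real_analytic_on F U"
  shows "J3 \<Omega> phiM phiS x = (1 / norm x) *\<^sub>R (\<chi> j. phiS x * pd F j x - F x * pd phiS j x)
    - (phiS x * F x / norm x ^ 3) *\<^sub>R x"
proof -
  have pd_phiK: "pd (phiK \<Omega> phiM phiS) j x = pd F j x / norm x - F x * x $ j / norm x ^ 3" for j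
    using assms(1-3) phiK has_field_derivative_pd[OF F \<open>x \<in> U\<close>] by (rule pd_divide_norm)
  show ?thesis
    using \<open>x \<noteq> 0\<close> by (simp add: J3_def vec_eq_iff pd_phiK phiK[OF \<open>x \<in> U\<close>] field_simps)
qed

lemma Jvec_eq:
  assumes "invertible (\<gamma> x)" "\<gamma> x *v x = x" "x \<noteq> 0"
    and J3: "J3 \<Omega> phiM phiS x = (1 / norm x) *\<^sub>R V - (phiS x * F / norm x ^ 3) *\<^sub>R x"
  defines "c \<equiv> -4 / sqrt \<bar>det (\<gamma> x)\<bar>"
  shows "Jvec \<gamma> \<Omega> phiM phiS x = c *\<^sub>R (matrix_inv (\<gamma> x) *v J1 phiM phiS x)
    + (1 / norm x ^ 3) *\<^sub>R ((norm x)\<^sup>2 *\<^sub>R ((- c) *\<^sub>R (matrix_inv (\<gamma> x) *v V)) + (c * phiS x * F) *\<^sub>R x)"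
proof -
  have fixes_x: "matrix_inv (\<gamma> x) *v x = x"
    using arg_cong[OF assms(2), of "\<lambda>v. matrix_inv (\<gamma> x) *v v"]
    by (simp add: matrix_vector_mul_assoc invertible_matrix_inv[OF assms(1)])
  have "Jvec \<gamma> \<Omega> phiM phiS x = c *\<^sub>R (matrix_inv (\<gamma> x) *v J1 phiM phiS x)
      - (c / norm x) *\<^sub>R (matrix_inv (\<gamma> x) *v V) + (c * phiS x * F / norm x ^ 3) *\<^sub>R x"
    by (simp add: Jvec_def J3 c_def fixes_x matrix_vector_mult_diff_distrib matrix_vector_right_distrib
        matrix_vector_mult_scaleR scaleR_diff_right scaleR_add_right)
  also have "\<dots> = c *\<^sub>R (matrix_inv (\<gamma> x) *v J1 phiM phiS x)
      + (1 / norm x ^ 3) *\<^sub>R ((norm x)\<^sup>2 *\<^sub>R ((- c) *\<^sub>R (matrix_inv (\<gamma> x) *v V)) + (c * phiS x * F) *\<^sub>R x)"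
    using \<open>x \<noteq> 0\<close> by (simp add: vec_eq_iff field_simps power2_eq_square power3_eq_cube)
  finally show ?thesis .
qed

lemma real_analytic_on_phiK_numerator:
  assumes "real_analytic_on f\<Omega> U" "real_analytic_on phiM U" "real_analytic_on phiS U"
    and pos: "\<And>x. x \<in> U \<Longrightarrow> f\<Omega> x > 0"
  shows "real_analytic_on
    (\<lambda>x. sqrt ((norm x)\<^sup>2 * f\<Omega> x * ((phiM x)\<^sup>2 + (phiS x)\<^sup>2) + 1/4) / sqrt (f\<Omega> x)) U"
proof (rule real_analytic_on_divide)
  have "(norm x)\<^sup>2 * f\<Omega> x * ((phiM x)\<^sup>2 + (phiS x)\<^sup>2) + 1/4 > 0" if "x \<in> U" for x
    using pos[OF that] by (simp add: add_nonneg_pos)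
  then show "real_analytic_on (\<lambda>x. sqrt ((norm x)\<^sup>2 * f\<Omega> x * ((phiM x)\<^sup>2 + (phiS x)\<^sup>2) + 1/4)) U"
    using assms(1-3)
    by (intro real_analytic_on_sqrt real_analytic_on_add real_analytic_on_mult real_analytic_on_power
        real_analytic_on_norm_power2 real_analytic_on_const) auto
  show "real_analytic_on (\<lambda>x. sqrt (f\<Omega> x)) U"
    using assms(1) pos by (rule real_analytic_on_sqrt)
  show "sqrt (f\<Omega> x) \<noteq> 0" if "x \<in> U" for x
    using pos[OF that] by simp
qed

lemma Jvec_analytic_decomposition:
  fixes \<gamma> :: "real^3 \<Rightarrow> real^3^3" and F :: "real^3 \<Rightarrow> real"
  assumes "open U"
    and gamma: "\<And>j k. real_analytic_on (\<lambda>x. \<gamma> x $ j $ k) U"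
    and det: "\<And>x. x \<in> U \<Longrightarrow> det (\<gamma> x) \<noteq> 0"
    and radial: "\<And>x. x \<in> U \<Longrightarrow> \<gamma> x *v x = x"
    and phiM: "real_analytic_on phiM U" and phiS: "real_analytic_on phiS U"
    and F: "real_analytic_on F U"
    and phiK: "\<And>x. x \<in> U \<Longrightarrow> phiK \<Omega> phiM phiS x = F x / norm x"
  shows "\<exists>H1 H2 :: real^3 \<Rightarrow> real^3. \<exists>H :: real^3 \<Rightarrow> real.
    (\<forall>i. real_analytic_on (\<lambda>x. H1 x $ i) U) \<and> (\<forall>i. real_analytic_on (\<lambda>x. H2 x $ i) U) \<and>
    real_analytic_on H U \<and>
    (\<forall>x\<in>U. x \<noteq> 0 \<longrightarrow>
      Jvec \<gamma> \<Omega> phiM phiS x = H1 x + (1 / norm x ^ 3) *\<^sub>R ((norm x)\<^sup>2 *\<^sub>R H2 x + H x *\<^sub>R x))"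
proof (intro exI conjI allI ballI impI)
  define c where "c x = -4 / sqrt \<bar>det (\<gamma> x)\<bar>" for x
  define V where "V x = (\<chi> j. phiS x * pd F j x - F x * pd phiS j x)" for x
  have "real_analytic_on (\<lambda>x. -4 * (1 / sqrt \<bar>det (\<gamma> x)\<bar>)) U"
    using gamma det by (intro real_analytic_on_mult real_analytic_on_const real_analytic_on_inverse_sqrt_abs
        real_analytic_on_det)
  then have c: "real_analytic_on c U"
    by (simp add: c_def[abs_def])
  have "real_analytic_on (\<lambda>x. J1 phiM phiS x $ i) U" for i
    unfolding J1_def using phiM phiS
    by (simp, intro real_analytic_on_diff real_analytic_on_mult real_analytic_on_pd)
  then show "real_analytic_on (\<lambda>x. (c x *\<^sub>R (matrix_inv (\<gamma> x) *v J1 phiM phiS x)) $ i) U" for i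
    using \<open>open U\<close> gamma det c
    by (simp, intro real_analytic_on_mult real_analytic_on_matrix_inv_mult_vector)
  have "real_analytic_on (\<lambda>x. V x $ i) U" for i
    unfolding V_def using phiS F
    by (simp, intro real_analytic_on_diff real_analytic_on_mult real_analytic_on_pd)
  then show "real_analytic_on (\<lambda>x. (- c x *\<^sub>R (matrix_inv (\<gamma> x) *v V x)) $ i) U" for i
    using \<open>open U\<close> gamma det c
    by (simp, intro real_analytic_on_minus real_analytic_on_mult real_analytic_on_matrix_inv_mult_vector)
  show "real_analytic_on (\<lambda>x. c x * phiS x * F x) U"
    using c phiS F by (intro real_analytic_on_mult)
  fix x
  assume "x \<in> U" "x \<noteq> 0"
  have "invertible (\<gamma> x)"
    using det[OF \<open>x \<in> U\<close>] invertible_det_nz by blast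
  then show "Jvec \<gamma> \<Omega> phiM phiS x = c x *\<^sub>R (matrix_inv (\<gamma> x) *v J1 phiM phiS x)
      + (1 / norm x ^ 3) *\<^sub>R ((norm x)\<^sup>2 *\<^sub>R (- c x *\<^sub>R (matrix_inv (\<gamma> x) *v V x)) + (c x * phiS x * F x) *\<^sub>R x)"
    using radial[OF \<open>x \<in> U\<close>] \<open>x \<noteq> 0\<close> J3_eq[OF \<open>open U\<close> \<open>x \<in> U\<close> \<open>x \<noteq> 0\<close> phiK F]
    unfolding c_def V_def by (rule Jvec_eq)
qed

text \<open>Only analyticity, positive definiteness and \<open>\<gamma> x *v x = x\<close> of the metric and the form
  \<open>\<Omega> = r\<^sup>2 f\<^sub>\<Omega>\<close> are needed; the symmetry and normalisation of \<open>\<gamma>\<close>, the value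
  \<open>f\<^sub>\<Omega> 0 = 1\<close> and the leading-order behaviour of the potentials play no role here.\<close>
theorem mainTheorem4:
  fixes \<gamma> :: "real^3 \<Rightarrow> real^3^3"
    and \<Omega> f\<Omega> phiM phiS :: "real^3 \<Rightarrow> real"
    and \<rho> M :: real and S :: "real^3"
  assumes rho_pos: "\<rho> > 0"
    and gamma_analytic: "\<forall>j k. real_analytic_on (\<lambda>x. \<gamma> x $ j $ k) (ball 0 \<rho>)"
    and gamma_sym: "\<forall>x\<in>ball 0 \<rho>. transpose (\<gamma> x) = \<gamma> x"
    and gamma_posdef: "\<forall>x\<in>ball 0 \<rho>. \<forall>v. v \<noteq> 0 \<longrightarrow> v \<bullet> (\<gamma> x *v v) > 0"
    and normal_origin: "\<gamma> 0 = mat 1"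
    and normal_gauss: "\<forall>x\<in>ball 0 \<rho>. \<gamma> x *v x = x"
    and phiM_analytic: "real_analytic_on phiM (ball 0 \<rho>)"
    and phiS_analytic: "real_analytic_on phiS (ball 0 \<rho>)"
    and fOmega_analytic: "real_analytic_on f\<Omega> (ball 0 \<rho>)"
    and phiM_lead: "\<exists>C. \<forall>x\<in>ball 0 \<rho>. \<bar>phiM x - M\<bar> \<le> C * norm x"
    and phiS_lead: "\<exists>C. \<forall>x\<in>ball 0 \<rho>. \<bar>phiS x - S \<bullet> x\<bar> \<le> C * (norm x)\<^sup>2"
    and Omega_eq: "\<forall>x\<in>ball 0 \<rho>. \<Omega> x = (norm x)\<^sup>2 * f\<Omega> x"
    and fOmega_pos: "\<forall>x\<in>ball 0 \<rho>. f\<Omega> x > 0"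
    and fOmega_origin: "f\<Omega> 0 = 1"
  shows "\<exists>e>0. \<exists>H1 H2 :: real^3 \<Rightarrow> real^3. \<exists>H :: real^3 \<Rightarrow> real.
           (\<forall>i. real_analytic_on (\<lambda>x. H1 x $ i) (ball 0 e)) \<and>
           (\<forall>i. real_analytic_on (\<lambda>x. H2 x $ i) (ball 0 e)) \<and>
           real_analytic_on H (ball 0 e) \<and>
           (\<forall>x\<in>ball 0 e. x \<noteq> 0 \<longrightarrow>
              Jvec \<gamma> \<Omega> phiM phiS x
                = H1 x + (1 / norm x ^ 3) *\<^sub>R ((norm x)\<^sup>2 *\<^sub>R H2 x + H x *\<^sub>R x))"
proof -
  define F where "F x = sqrt ((norm x)\<^sup>2 * f\<Omega> x * ((phiM x)\<^sup>2 + (phiS x)\<^sup>2) + 1/4) / sqrt (f\<Omega> x)"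
    for x :: "real^3"
  have "real_analytic_on F (ball 0 \<rho>)"
    unfolding F_def using fOmega_analytic phiM_analytic phiS_analytic fOmega_pos
    by (intro real_analytic_on_phiK_numerator) auto
  moreover have "phiK \<Omega> phiM phiS x = F x / norm x" if "x \<in> ball 0 \<rho>" for x
    unfolding F_def using Omega_eq fOmega_pos that by (intro phiK_eq_divide_norm) auto
  moreover have "det (\<gamma> x) \<noteq> 0" if "x \<in> ball 0 \<rho>" for x
    using gamma_posdef that by (intro det_nonzero_if_pos_def) blast
  ultimately have "\<exists>H1 H2 :: real^3 \<Rightarrow> real^3. \<exists>H :: real^3 \<Rightarrow> real.
      (\<forall>i. real_analytic_on (\<lambda>x. H1 x $ i) (ball 0 \<rho>)) \<and> (\<forall>i. real_analytic_on (\<lambda>x. H2 x $ i) (ball 0 \<rho>)) \<and>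
      real_analytic_on H (ball 0 \<rho>) \<and>
      (\<forall>x\<in>ball 0 \<rho>. x \<noteq> 0 \<longrightarrow>
        Jvec \<gamma> \<Omega> phiM phiS x = H1 x + (1 / norm x ^ 3) *\<^sub>R ((norm x)\<^sup>2 *\<^sub>R H2 x + H x *\<^sub>R x))"
    using gamma_analytic normal_gauss phiM_analytic phiS_analytic
    by (intro Jvec_analytic_decomposition) auto
  then show ?thesis
    using rho_pos by blast
qed

end
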